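(* Let $f(\hat{x}) = s(\hat{x}) + z(\hat{x})$ on the unit sphere $\mathbb{S}^2$, where $s$ and $z$ are realizations of zero-mean Gaussian (possibly anisotropic) random processes on $\mathbb{S}^2$ that are uncorrelated, $\mathbb{E}\{\hat{s}_c\overline{\hat{z}_{c'}}\}=0$ for all $c,c'$, with spectral covariance matrices $\mathbf{C}_S^{cc'} = \mathbb{E}\{\hat{s}_c\overline{\hat{s}_{c'}}\}$ and $\mathbf{C}_Z^{cc'} = \mathbb{E}\{\hat{z}_c\overline{\hat{z}_{c'}}\}$. Let $h$ be an azimuthally symmetric window on $\mathbb{S}^2$, band-limited with maximum degree $L_h$ and with $\langle h,h\rangle = 1$, and put $N_h = L_h^2+2L_h$. For a filter function $\boldsymbol{\zeta}(\hat{y}) = (\zeta(\hat{y};0),\zeta(\hat{y};1),\dots)$ with components $\zeta(\hat{y};n) = \sum_{r=0}^{N_h} \hat{\zeta}_n^{r}\, Y_r(\hat{y})$, define the filtered distribution $v(\hat{y};n) = \big(g_f(\cdot\,;n)\circledast \zeta(\cdot\,;n)\big)(\hat{y})$ and the spatio-spectral mean-square error $$\mathcal{E}_{ss} = \mathbb{E}\Big\{\sum_{n=0}^{\infty} \big\| v(\cdot\,;n) - g_s(\cdot\,;n)\big\|^2\Big\}.$$ Define, for $(p,q)\leftrightarrow r$, $$H(c;r;n) = (-1)^q\sqrt{\tfrac{4\pi}{2p+1}}\,\hat{h}_p^{0}\, T(c;\,p,-q;\,n),$$ where $T(c;p,-q;n)$ denotes $T(c;r';n)$ with $(p,-q)\leftrightarrow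 r'$. Then the spectral response of the filter minimizing $\mathcal{E}_{ss}$ (over the coefficients $\hat{\zeta}_n^{r}$, $n\ge 0$, $0\le r\le N_h$) is given by $$\hat{\zeta}_n^{r} = \frac{\sum_{c=0}^{\infty}\sum_{c'=0}^{\infty} H(c;r;n)H(c';r;n)\,\mathbf{C}_S^{cc'}}{\sum_{c=0}^{\infty}\sum_{c'=0}^{\infty} H(c;r;n)H(c';r;n)\,\big(\mathbf{C}_S^{cc'}+\mathbf{C}_Z^{cc'}\big)}$$ for those $n,r$ for which the denominator $\sum_{c,c'} H(c;r;n)H(c';r;n)(\mathbf{C}_S^{cc'}+\mathbf{C}_Z^{cc'})$ is $>0$, and $\hat{\zeta}_n^{r}=0$ otherwise.
   Context: Points of $\mathbb{S}^2$ are $\hat{x}=(\sin\theta\cos\phi,\sin\theta\sin\phi,\cos\theta)$, $\theta\in[0,\pi]$, $\phi\in[0,2\pi)$; inner product $\langle f,g\rangle=\int_{\mathbb{S}^2} f\,\overline{g}\,\sin\theta\,d\theta\,d\phi$, norm $\|f\|=\langle f,f\rangle^{1/2}$. Spherical harmonics $Y_\ell^m(\theta,\phi)=N_\ell^m P_\ell^m(\cos\theta)e^{im\phi}$ with $N_\ell^m=\sqrt{\frac{2\ell+1}{4\pi}\frac{(\ell-m)!}{(\ell+m)!}}$ and $P_\ell^m$ the associated Legendre functions including the Condon–Shortley phase $(-1)^m$; they form an orthonormal basis of $L^2(\mathbb{S}^2)$. Pairs $(\ell,m)$, $|m|\le\ell$, are indexed by a single integer via $(\ell,m)\leftrightarrow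 n$, $n=\ell^2+\ell+m$; write $Y_n=Y_\ell^m$ and $\hat{f}_n=\hat{f}_\ell^m=\langle f,Y_\ell^m\rangle$. A function is band-limited with maximum degree $L$ if $\hat f_\ell^m=0$ for $\ell>L$; it is azimuthally symmetric if it depends only on $\theta$. Triple product: $T(c;r;n)=\int_{\mathbb{S}^2} Y_r(\hat x)Y_c(\hat x)\overline{Y_n(\hat x)}\,ds(\hat x)$. Rotation of an azimuthally symmetric $h$ to $\hat y=\hat y(\vartheta,\varphi)$: $\mathcal{D}(\hat y)h$ is the function with coefficients $(\mathcal{D}(\hat y)h)_\ell^m=\sqrt{\frac{4\pi}{2\ell+1}}\,\overline{Y_\ell^m(\vartheta,\varphi)}\,\hat h_\ell^0$. Spatially localized spherical harmonic transform (SLSHT) distribution of a signal $f$: $g_f(\hat y;n)=\int_{\mathbb{S}^2}(\mathcal{D}(\hat y)h)(\hat x)\,f(\hat x)\,\overline{Y_n(\hat x)}\,ds(\hat x)$, viewed as a function of $\hat y$ for each $n\ge 0$ (similarly $g_s$ for $s$). Convolution: $(h\circledast f)(\hat y)=\sum_{\ell\ge0}\sum_{m=-\ell}^{\ell}\hat h_\ell^m\hat f_\ell^m Y_\ell^m(\hat y)$. The expectation $\mathbb{E}$ is over the signal and noise processes. *)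

theory Defs
  imports "HOL-Probability.Probability" "HOL-Computational_Algebra.Polynomial"
          "HOL-Library.Discrete_Functions"
begin

text \<open>Associated Legendre functions with Condon--Shortley phase (Rodrigues' formula);
  for negative order via P_l^{-m} = (-1)^m (l-m)!/(l+m)! P_l^m.\<close>
definition assoc_legendre_nonneg :: "nat \<Rightarrow> nat \<Rightarrow> real \<Rightarrow> real" where
  "assoc_legendre_nonneg l m x =
     (-1) ^ m / (2 ^ l * fact l) * sqrt (1 - x\<^sup>2) ^ m *
     poly ((pderiv ^^ (l + m)) ([:-1, 0, 1:] ^ l)) x"

definition assoc_legendre :: "nat \<Rightarrow> int \<Rightarrow> real \<Rightarrow> real" where
  "assoc_legendre l m x =
     (if 0 \<le> m then assoc_legendre_nonneg l (nat m) x
      else (-1) ^ nat (-m) * fact (l - nat (-m)) / fact (l + nat (-m))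
             * assoc_legendre_nonneg l (nat (-m)) x)"

definition sh_norm :: "nat \<Rightarrow> int \<Rightarrow> real" where
  "sh_norm l m = sqrt ((2 * real l + 1) / (4 * pi) * (fact (nat (int l - m)) / fact (nat (int l + m))))"

text \<open>Y_l^m(\<theta>,\<phi>), functions on the sphere are written in the coordinates (\<theta>,\<phi>).\<close>
definition sph_harm :: "nat \<Rightarrow> int \<Rightarrow> real \<Rightarrow> real \<Rightarrow> complex" where
  "sph_harm l m \<theta> \<phi> = of_real (sh_norm l m * assoc_legendre l m (cos \<theta>)) * exp (\<i> * of_int m * of_real \<phi>)"

text \<open>Single index n = l^2 + l + m.\<close>
definition sh_deg :: "nat \<Rightarrow> nat" where "sh_deg n = floor_sqrt n"
definition sh_ord :: "nat \<Rightarrow> int" where "sh_ord n = int n - (int (sh_deg n))\<^sup>2 - int (sh_deg n)"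
definition sh_idx :: "nat \<Rightarrow> int \<Rightarrow> nat" where "sh_idx l m = nat (int l ^ 2 + int l + m)"

definition Yn :: "nat \<Rightarrow> real \<Rightarrow> real \<Rightarrow> complex" where
  "Yn n = sph_harm (sh_deg n) (sh_ord n)"

definition sph_dom :: "(real \<times> real) set" where
  "sph_dom = {0..pi} \<times> {0..<2*pi}"

definition sph_int :: "(real \<Rightarrow> real \<Rightarrow> complex) \<Rightarrow> complex" where
  "sph_int F = (LINT p : sph_dom | lborel. F (fst p) (snd p) * of_real (sin (fst p)))"

definition sph_inner :: "(real \<Rightarrow> real \<Rightarrow> complex) \<Rightarrow> (real \<Rightarrow> real \<Rightarrow> complex) \<Rightarrow> complex" where
  "sph_inner f g = sph_int (\<lambda>\<theta> \<phi>. f \<theta> \<phi> * cnj (g \<theta> \<phi>))"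

definition sph_sqnorm :: "(real \<Rightarrow> real \<Rightarrow> complex) \<Rightarrow> ennreal" where
  "sph_sqnorm f = (\<integral>\<^sup>+ p. ennreal (indicator sph_dom p * (cmod (f (fst p) (snd p)))\<^sup>2 * sin (fst p)) \<partial>lborel)"

definition sph_L2 :: "(real \<Rightarrow> real \<Rightarrow> complex) \<Rightarrow> bool" where
  "sph_L2 f \<longleftrightarrow> (\<lambda>p. indicator sph_dom p *\<^sub>R f (fst p) (snd p)) \<in> borel_measurable lborel
               \<and> sph_sqnorm f < \<infinity>"

definition sh_coeff :: "(real \<Rightarrow> real \<Rightarrow> complex) \<Rightarrow> nat \<Rightarrow> complex" where
  "sh_coeff f n = sph_inner f (Yn n)"

definition sh_coeff_lm :: "(real \<Rightarrow> real \<Rightarrow> complex) \<Rightarrow> nat \<Rightarrow> int \<Rightarrow> complex" where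
  "sh_coeff_lm f l m = sph_inner f (sph_harm l m)"

definition triple :: "nat \<Rightarrow> nat \<Rightarrow> nat \<Rightarrow> complex" where
  "triple c r n = sph_int (\<lambda>\<theta> \<phi>. Yn r \<theta> \<phi> * Yn c \<theta> \<phi> * cnj (Yn n \<theta> \<phi>))"

text \<open>(D(y)h)(x) for azimuthally symmetric h, y = (\<Theta>,\<phi>'): the function with coefficients
  sqrt(4\<pi>/(2l+1)) conj(Y_l^m(y)) h_l^0.\<close>
definition rot :: "(real \<Rightarrow> real \<Rightarrow> complex) \<Rightarrow> real \<Rightarrow> real \<Rightarrow> real \<Rightarrow> real \<Rightarrow> complex" where
  "rot h \<Theta> \<psi> \<theta> \<phi> =
     (\<Sum>l. \<Sum>m\<in>{- int l..int l}. of_real (sqrt (4 * pi / (2 * real l + 1)))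
            * cnj (sph_harm l m \<Theta> \<psi>) * sh_coeff_lm h l 0 * sph_harm l m \<theta> \<phi>)"

definition slsht :: "(real \<Rightarrow> real \<Rightarrow> complex) \<Rightarrow> (real \<Rightarrow> real \<Rightarrow> complex) \<Rightarrow> nat \<Rightarrow> real \<Rightarrow> real \<Rightarrow> complex" where
  "slsht h f n \<Theta> \<psi> = sph_int (\<lambda>\<theta> \<phi>. rot h \<Theta> \<psi> \<theta> \<phi> * f \<theta> \<phi> * cnj (Yn n \<theta> \<phi>))"

definition sph_conv :: "(real \<Rightarrow> real \<Rightarrow> complex) \<Rightarrow> (real \<Rightarrow> real \<Rightarrow> complex) \<Rightarrow> real \<Rightarrow> real \<Rightarrow> complex" where
  "sph_conv a b \<Theta> \<psi> = (\<Sum>j. sh_coeff a j * sh_coeff b j * Yn j \<Theta> \<psi>)"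

text \<open>The coefficient family is jointly Gaussian: every finite real linear combination of
  real and imaginary parts is normally distributed (possibly degenerate).\<close>
definition gaussian_coeffs :: "'w measure \<Rightarrow> ('w \<Rightarrow> nat \<Rightarrow> complex) \<Rightarrow> bool" where
  "gaussian_coeffs M X \<longleftrightarrow>
     (\<forall>c. (\<lambda>\<omega>. X \<omega> c) \<in> borel_measurable M) \<and>
     (\<forall>I (a :: nat \<Rightarrow> real) (b :: nat \<Rightarrow> real). finite I \<longrightarrow>
        (let Y = (\<lambda>\<omega>. \<Sum>c\<in>I. a c * Re (X \<omega> c) + b c * Im (X \<omega> c)) in
           (\<exists>\<mu>. AE \<omega> in M. Y \<omega> = \<mu>) \<or>
           (\<exists>\<mu> \<sigma>. \<sigma> > 0 \<and> distributed M lborel Y (normal_density \<mu> \<sigma>))))"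

end

theory Submission
  imports Defs
begin

text \<open>
  For a band-limited window, the SLSHT distribution of a square-integrable signal in the index n is a
  finite expansion in the harmonics Y_r, r \<le> N_h, and by Gaunt's expansion of products of spherical
  harmonics its r-th coefficient is the finite linear combination \<Sum>_c H(c;r;n) f_c of spectral
  coefficients. By Parseval, the error of the filtered distribution is then
  \<Sum>_n \<Sum>_{r \<le> N_h} |\<zeta>_n^r (X + W) - X|^2 with X = \<Sum>_c H s_c and W = \<Sum>_c H z_c. As s and z are
  uncorrelated, E |w (X + W) - X|^2 = E|X|^2 |1 - w|^2 + E|W|^2 |w|^2, which is minimised termwise by the
  Wiener gain E|X|^2 / (E|X|^2 + E|W|^2), uniquely where the denominator is positive; expanding E|X|^2 in
  the spectral covariances gives the numerator and denominator of the theorem. The Gaussian hypothesis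
  only serves to make the coefficients square integrable. Orthonormality of the Y_n, on which Parseval
  and Gaunt's expansion rest, is derived from Rodrigues' formula by repeated integration by parts.
\<close>

abbreviation pderivs :: "nat \<Rightarrow> real poly \<Rightarrow> real poly" where "pderivs k p \<equiv> (pderiv ^^ k) p"

lemma pderivs_Suc_right: "pderivs (Suc k) p = pderivs k (pderiv p)" by (simp add: funpow_Suc_right del: funpow.simps)

lemma dvd_pderiv_root:
  assumes "[:-a,1:]^(Suc k) dvd (p::real poly)"
  shows "[:-a,1:]^k dvd pderiv p"
proof -
  obtain q where q: "p = [:-a,1:]^(Suc k) * q" using assms by (auto elim: dvdE)
  have "pderiv p = smult (of_nat (Suc k)) ([:-a,1:]^k) * pderiv [:-a,1:] * q + [:-a,1:]^(Suc k) * pderiv q"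
    unfolding q pderiv_mult pderiv_power_Suc by (simp add: mult_ac)
  also have "\<dots> = [:-a,1:]^k * (smult (of_nat (Suc k)) (pderiv [:-a,1:] * q) + [:-a,1:] * pderiv q)"
    by (simp add: algebra_simps)
  finally show ?thesis by simp
qed

lemma dvd_pderivs_root:
  assumes "[:-a,1:]^k dvd (p::real poly)" "j \<le> k"
  shows "[:-a,1:]^(k-j) dvd pderivs j p"
  using assms(2)
proof (induction j)
  case 0 then show ?case using assms(1) by simp
next
  case (Suc j)
  then have "[:-a,1:]^(Suc (k - Suc j)) dvd pderivs j p" using Suc_diff_Suc[of j k] by simp
  then show ?case using dvd_pderiv_root by simp
qed

lemma poly_pderivs_root:
  assumes "[:-a,1:]^k dvd (p::real poly)" "j < k"
  shows "poly (pderivs j p) a = 0"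
proof -
  have "[:-a,1:]^(k-j) dvd pderivs j p" using dvd_pderivs_root[OF assms(1)] assms(2) by simp
  moreover have "[:-a,1:] dvd [:-a,1:]^(k-j)" using assms(2) by (simp add: dvd_power)
  ultimately have "[:-a,1:] dvd pderivs j p" using dvd_trans by blast
  then show ?thesis by (simp add: poly_eq_0_iff_dvd)
qed

lemma coeff_pderivs: "coeff (pderivs k p) j = fact (j+k) / fact j * coeff p (j+k)"
proof (induction k arbitrary: j)
  case 0 then show ?case by simp
next
  case (Suc k)
  have "coeff (pderivs (Suc k) p) j = of_nat (Suc j) * coeff (pderivs k p) (Suc j)"
    by (simp add: coeff_pderiv)
  also have "\<dots> = of_nat (Suc j) * (fact (Suc j + k) / fact (Suc j) * coeff p (Suc j + k))"
    using Suc by simp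
  also have "\<dots> = fact (j + Suc k) / fact j * coeff p (j + Suc k)"
  proof -
    have e: "Suc j + k = Suc (j+k)" "j + Suc k = Suc (j+k)" by simp_all
    have f1: "fact (Suc (j+k)) = of_nat (Suc (j+k)) * (fact (j+k)::real)" by (rule fact_Suc)
    have f2: "fact (Suc j) = of_nat (Suc j) * (fact j::real)" by (rule fact_Suc)
    show ?thesis unfolding e f1 f2 by (simp add: field_simps del: of_nat_Suc)
  qed
  finally show ?case .
qed

lemma pderivs_eq_0: assumes "degree p < k" shows "pderivs k p = 0"
proof -
  have "coeff (pderivs k p) j = 0" for j using assms by (simp add: coeff_pderivs coeff_eq_0)
  then show ?thesis by (simp add: poly_eq_iff)
qed

lemma pderivs_eq_const: assumes "degree p \<le> k" shows "pderivs k p = [: fact k * coeff p k :]"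
proof -
  have "coeff (pderivs k p) j = coeff [: fact k * coeff p k :] j" for j
  proof (cases j)
    case 0 then show ?thesis by (simp add: coeff_pderivs)
  next
    case (Suc i) then show ?thesis using assms by (simp add: coeff_pderivs coeff_eq_0)
  qed
  then show ?thesis by (simp add: poly_eq_iff)
qed

lemma ex_poly_antiderivative: "\<exists>F. pderiv F = (R::real poly)"
proof -
  define F where "F = (\<Sum>i\<le>degree R. monom (coeff R i / of_nat (Suc i)) (Suc i))"
  have "pderiv F = (\<Sum>i\<le>degree R. monom (coeff R i) i)"
    unfolding F_def higher_pderiv_sum[of 1, simplified] pderiv_monom by (intro sum.cong) (auto simp del: of_nat_Suc)
  also have "\<dots> = R" by (rule poly_as_sum_of_monoms)
  finally show ?thesis by blast
qed

definition poly_integral :: "real poly \<Rightarrow> real" where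
  "poly_integral R = (let F = (SOME F. pderiv F = R) in poly F 1 - poly F (-1))"

lemma poly_integral_eq: assumes "pderiv F = R" shows "poly_integral R = poly F 1 - poly F (-1)"
proof -
  define G where "G = (SOME F. pderiv F = R)"
  have G: "pderiv G = R" unfolding G_def by (rule someI_ex[OF ex_poly_antiderivative])
  have "pderiv (F - G) = 0" using G assms by (simp add: pderiv_diff)
  then obtain h where h: "F - G = [:h:]" using pderiv_iszero by blast
  have "poly F x = poly G x + h" for x
    using arg_cong[OF h, of "\<lambda>p. poly p x"] by simp
  then show ?thesis unfolding poly_integral_def G_def[symmetric] Let_def by simp
qed

lemma poly_integral_pderiv: "poly_integral (pderiv P) = poly P 1 - poly P (-1)" by (rule poly_integral_eq) simp

lemma poly_integral_add: "poly_integral (R1 + R2) = poly_integral R1 + poly_integral R2"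
proof -
  obtain F1 F2 where "pderiv F1 = R1" "pderiv F2 = R2" using ex_poly_antiderivative by blast
  then show ?thesis using poly_integral_eq[of F1 R1] poly_integral_eq[of F2 R2] poly_integral_eq[of "F1+F2" "R1+R2"]
    by (simp add: pderiv_add)
qed

lemma poly_integral_smult: "poly_integral (smult c R) = c * poly_integral R"
proof -
  obtain F where "pderiv F = R" using ex_poly_antiderivative by blast
  then have "poly_integral R = poly F 1 - poly F (-1)" "poly_integral (smult c R) = c * poly F 1 - c * poly F (-1)"
    using poly_integral_eq[of F R] poly_integral_eq[of "smult c F" "smult c R"] by (simp_all add: pderiv_smult)
  then show ?thesis by (simp add: right_diff_distrib)
qed

lemma poly_integral_minus: "poly_integral (- R) = - poly_integral R" using poly_integral_smult[of "-1" R] by simp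
lemma poly_integral_diff: "poly_integral (R1 - R2) = poly_integral R1 - poly_integral R2" using poly_integral_add[of R1 "-R2"] poly_integral_minus by simp
lemma poly_integral_0: "poly_integral 0 = 0" using poly_integral_smult[of 0 0] by simp
lemma poly_integral_by_parts: "poly_integral (pderiv A * B) = poly (A*B) 1 - poly (A*B) (-1) - poly_integral (A * pderiv B)"
proof -
  have "pderiv A * B = pderiv (A * B) - A * pderiv B" by (simp add: pderiv_mult)
  then show ?thesis by (simp add: poly_integral_diff poly_integral_pderiv)
qed

definition vanishes_pm1 :: "real poly \<Rightarrow> bool" where "vanishes_pm1 p \<longleftrightarrow> poly p 1 = 0 \<and> poly p (-1) = 0"

lemma poly_integral_by_parts_iter:
  assumes "\<forall>i<k. vanishes_pm1 (pderivs i A * pderivs (k - 1 - i) B)"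
  shows "poly_integral (pderivs k A * B) = (-1)^k * poly_integral (A * pderivs k B)"
  using assms
proof (induction k arbitrary: B)
  case 0 then show ?case by simp
next
  case (Suc k)
  have b: "vanishes_pm1 (pderivs k A * B)" using Suc.prems by auto
  have ih: "poly_integral (pderivs k A * pderiv B) = (-1)^k * poly_integral (A * pderivs k (pderiv B))"
  proof (rule Suc.IH, intro allI impI)
    fix i assume "i < k"
    then have "vanishes_pm1 (pderivs i A * pderivs (Suc k - 1 - i) B)" using Suc.prems by auto
    moreover have "pderivs (Suc k - 1 - i) B = pderivs (k - 1 - i) (pderiv B)"
      using \<open>i<k\<close> by (simp add: pderivs_Suc_right[symmetric] Suc_diff_Suc)
    ultimately show "vanishes_pm1 (pderivs i A * pderivs (k - 1 - i) (pderiv B))" by simp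
  qed
  have b1: "poly (pderivs k A * B) 1 = 0" and b2: "poly (pderivs k A * B) (-1) = 0" using b unfolding vanishes_pm1_def by blast+
  have "poly_integral (pderiv (pderivs k A) * B) = - poly_integral (pderivs k A * pderiv B)"
    using poly_integral_by_parts[of "pderivs k A" B] b1 b2 by linarith
  then have "poly_integral (pderivs (Suc k) A * B) = - poly_integral (pderivs k A * pderiv B)" by simp
  also have "pderivs k (pderiv B) = pderiv (pderivs k B)" using pderivs_Suc_right[of k B] by simp
  then have "- poly_integral (pderivs k A * pderiv B) = (-1)^Suc k * poly_integral (A * pderivs (Suc k) B)" using ih by simp
  finally show ?case .
qed

section \<open>Orthogonality of the derivatives in Rodrigues' formula\<close>

definition rodrigues_base :: "nat \<Rightarrow> real poly" where "rodrigues_base l = [:-1,0,1:]^l"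
definition legendre_weight :: "nat \<Rightarrow> real poly" where "legendre_weight m = [:1,0,-1:]^m"
definition legendre_deriv :: "nat \<Rightarrow> nat \<Rightarrow> real poly" where "legendre_deriv l m = pderivs (l+m) (rodrigues_base l)"

lemma rodrigues_base_factor: "rodrigues_base l = [:-1,1:]^l * [:- (-1),1:]^l"
proof -
  have h: "[:-1,0,1::real:] = [:-1,1:] * [:- (-1),1:]" by simp
  show ?thesis unfolding rodrigues_base_def by (simp only: h power_mult_distrib)
qed

lemma legendre_weight_eq: "legendre_weight m = smult ((-1)^m) (rodrigues_base m)"
proof -
  have h: "[:1,0,-1::real:] = smult (-1) [:-1,0,1:]" by simp
  show ?thesis unfolding legendre_weight_def rodrigues_base_def by (simp only: h smult_power)
qed

lemma rodrigues_base_root_1: "[:-1,1:]^l dvd rodrigues_base l" by (simp add: rodrigues_base_factor)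
lemma rodrigues_base_root_m1: "[:-(-1),1:]^l dvd rodrigues_base l" by (simp add: rodrigues_base_factor)
lemma legendre_weight_mult: "legendre_weight m * R = smult ((-1)^m) (rodrigues_base m * R)" by (simp add: legendre_weight_eq)
lemma legendre_weight_mult_root_1: "[:-1,1:]^m dvd legendre_weight m * R" unfolding legendre_weight_mult by (rule dvd_smult[OF dvd_mult2[OF rodrigues_base_root_1]])
lemma legendre_weight_mult_root_m1: "[:-(-1),1:]^m dvd legendre_weight m * R" unfolding legendre_weight_mult by (rule dvd_smult[OF dvd_mult2[OF rodrigues_base_root_m1]])

lemma poly_legendre_weight: "poly (legendre_weight m) x = (1 - x^2)^m" by (simp add: legendre_weight_def power2_eq_square algebra_simps)

lemma degree_rodrigues_base: "degree (rodrigues_base l) = 2*l"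
  unfolding rodrigues_base_def by (simp add: degree_power_eq)
lemma coeff_rodrigues_base_top: "coeff (rodrigues_base l) (2*l) = 1"
proof -
  have "lead_coeff (rodrigues_base l) = 1" unfolding rodrigues_base_def by (simp add: lead_coeff_power)
  then show ?thesis using degree_rodrigues_base by simp
qed
lemma degree_legendre_weight: "degree (legendre_weight m) = 2*m" by (simp add: legendre_weight_eq degree_rodrigues_base)
lemma coeff_legendre_weight_top: "coeff (legendre_weight m) (2*m) = (-1)^m" by (simp add: legendre_weight_eq coeff_rodrigues_base_top)
lemma legendre_weight_nonzero: "legendre_weight m \<noteq> 0" using coeff_legendre_weight_top[of m] by auto

lemma degree_legendre_deriv: "degree (legendre_deriv l m) = l - m"
  unfolding legendre_deriv_def by (simp add: degree_higher_pderiv degree_rodrigues_base)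
lemma coeff_legendre_deriv_top: assumes "m \<le> l" shows "coeff (legendre_deriv l m) (l - m) = fact (2*l) / fact (l-m)"
proof -
  have "l - m + (l + m) = 2*l" using assms by simp
  then show ?thesis unfolding legendre_deriv_def coeff_pderivs by (simp add: coeff_rodrigues_base_top[unfolded mult_2] mult_2)
qed

lemma vanishes_pm1_rodrigues_products:
  assumes "m \<le> l"
  shows "\<forall>i<l+m. vanishes_pm1 (pderivs i (rodrigues_base l) * pderivs (l + m - 1 - i) (legendre_weight m * R))"
proof (intro allI impI)
  fix i assume i: "i < l + m"
  show "vanishes_pm1 (pderivs i (rodrigues_base l) * pderivs (l + m - 1 - i) (legendre_weight m * R))"
  proof (cases "i < l")
    case True
    then show ?thesis unfolding vanishes_pm1_def using poly_pderivs_root[OF rodrigues_base_root_1 True] poly_pderivs_root[OF rodrigues_base_root_m1 True] by simp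
  next
    case False
    then have "l + m - 1 - i < m" using i by simp
    then show ?thesis unfolding vanishes_pm1_def
      using poly_pderivs_root[OF legendre_weight_mult_root_1 \<open>l + m - 1 - i < m\<close>, of R] poly_pderivs_root[OF legendre_weight_mult_root_m1 \<open>l + m - 1 - i < m\<close>, of R]
      by simp
  qed
qed

lemma legendre_deriv_orth_low_degree:
  assumes "m \<le> l" "degree (legendre_weight m * R) < l + m"
  shows "poly_integral (legendre_deriv l m * (legendre_weight m * R)) = 0"
proof -
  have "poly_integral (legendre_deriv l m * (legendre_weight m * R)) = (-1)^(l+m) * poly_integral (rodrigues_base l * pderivs (l+m) (legendre_weight m * R))"
    unfolding legendre_deriv_def by (rule poly_integral_by_parts_iter[OF vanishes_pm1_rodrigues_products[OF assms(1)]])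
  also have "\<dots> = 0" using pderivs_eq_0[OF assms(2)] by (simp add: poly_integral_0)
  finally show ?thesis .
qed

lemma legendre_deriv_orth:
  assumes "m \<le> l" "l' < l"
  shows "poly_integral (legendre_deriv l m * (legendre_weight m * legendre_deriv l' m)) = 0"
proof (rule legendre_deriv_orth_low_degree[OF assms(1)])
  show "degree (legendre_weight m * legendre_deriv l' m) < l + m"
  proof (cases "legendre_weight m * legendre_deriv l' m = 0")
    case True
    have "degree (legendre_weight m * legendre_deriv l' m) = 0" unfolding True by simp
    then show ?thesis using assms by simp
  next
    case False
    then have "legendre_deriv l' m \<noteq> 0" by auto
    then have "m \<le> l'" using pderivs_eq_0[of "rodrigues_base l'" "l'+m"] unfolding legendre_deriv_def by (cases "m \<le> l'") (auto simp: degree_rodrigues_base)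
    then have "degree (legendre_weight m * legendre_deriv l' m) = m + l'"
      using \<open>m \<le> l'\<close> \<open>legendre_deriv l' m \<noteq> 0\<close> by (simp add: degree_mult_eq degree_legendre_weight degree_legendre_deriv legendre_weight_nonzero)
    then show ?thesis using assms by simp
  qed
qed

lemma poly_integral_legendre_weight_Suc:
  "(2 * real l + 3) * poly_integral (legendre_weight (Suc l)) = 2 * (real l + 1) * poly_integral (legendre_weight l)"
proof -
  have pW: "pderiv (legendre_weight (Suc l)) = smult (of_nat (Suc l)) (legendre_weight l) * [:0,-2:]"
    unfolding legendre_weight_def pderiv_power_Suc by (simp add: pderiv_pCons)
  have x_pW: "[:0,1:] * pderiv (legendre_weight (Suc l)) = smult (2 * of_nat (Suc l)) (legendre_weight (Suc l) - legendre_weight l)"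
    unfolding pW by (rule poly_ext) (simp add: legendre_weight_def algebra_simps)
  have "poly_integral (legendre_weight (Suc l)) = poly_integral (pderiv [:0,1:] * legendre_weight (Suc l))"
    by (simp add: pderiv_pCons)
  also have "\<dots> = - poly_integral ([:0,1:] * pderiv (legendre_weight (Suc l)))"
    using poly_integral_by_parts[of "[:0,1:]" "legendre_weight (Suc l)"] by (simp add: poly_legendre_weight)
  finally show ?thesis
    unfolding x_pW poly_integral_smult poly_integral_diff by (simp add: algebra_simps)
qed

lemma poly_integral_legendre_weight: "poly_integral (legendre_weight l) = 2^(2*l+1) * (fact l)^2 / fact (2*l+1)"
proof (induction l)
  case 0
  have "pderiv [:0,1::real:] = 1" by (simp add: pderiv_pCons)
  then show ?case using poly_integral_pderiv[of "[:0,1:]"] by (simp add: legendre_weight_def)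
next
  case (Suc l)
  have step: "poly_integral (legendre_weight (Suc l)) = 2 * (real l + 1) / (2 * real l + 3) * poly_integral (legendre_weight l)"
    using poly_integral_legendre_weight_Suc[of l] by (simp add: field_simps)
  have arith: "2 * (x + 1) / (2 * x + 3) * (P * G^2 / F) = 4 * P * ((x + 1) * G)^2 / ((2 * x + 3) * (2 * x + 2) * F)"
    if "0 \<le> x" for x P G F :: real
  proof -
    have den: "(2*x+3)*(2*x+2)*F = (2*(x+1)) * ((2*x+3)*F)" by (simp add: algebra_simps)
    have num: "4*P*((x+1)*G)^2 = (2*(x+1)) * (2*(x+1)*P*G^2)" by (simp add: power2_eq_square algebra_simps)
    have "2*(x+1) \<noteq> 0" using that by simp
    then have "4 * P * ((x + 1) * G)^2 / ((2 * x + 3) * (2 * x + 2) * F) = (2*(x+1)*P*G^2) / ((2*x+3)*F)"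
      unfolding den num by (rule mult_divide_mult_cancel_left)
    then show ?thesis by (simp add: mult.assoc)
  qed
  have e1: "fact (2 * Suc l + 1) = (2 * real l + 3) * (2 * real l + 2) * (fact (2*l+1) :: real)"
    by (simp add: fact_Suc algebra_simps)
  have e2: "fact (Suc l) = (real l + 1) * (fact l :: real)" by (simp add: fact_Suc)
  have e3: "(2::real)^(2 * Suc l + 1) = 4 * 2^(2*l+1)" by (simp add: power_add)
  show ?case unfolding step Suc.IH e1 e2 e3 using arith[of "real l"] by simp
qed

lemma legendre_deriv_norm:
  assumes "m \<le> l"
  shows "poly_integral (legendre_deriv l m * (legendre_weight m * legendre_deriv l m)) = fact (l+m) * fact (2*l) / fact (l-m) * (2^(2*l+1) * (fact l)^2 / fact (2*l+1))"
proof -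
  have Qnz: "legendre_deriv l m \<noteq> 0" using coeff_legendre_deriv_top[OF assms] by auto
  have dg: "degree (legendre_weight m * legendre_deriv l m) = l + m"
    using Qnz assms by (simp add: degree_mult_eq degree_legendre_weight degree_legendre_deriv legendre_weight_nonzero)
  have cf: "coeff (legendre_weight m * legendre_deriv l m) (l+m) = (-1)^m * (fact (2*l) / fact (l-m))"
  proof -
    have e: "l + m = degree (legendre_weight m) + degree (legendre_deriv l m)" "degree (legendre_deriv l m) = l - m"
      using assms by (simp_all add: degree_legendre_weight degree_legendre_deriv)
    have "coeff (legendre_weight m * legendre_deriv l m) (l + m) = coeff (legendre_weight m) (degree (legendre_weight m)) * coeff (legendre_deriv l m) (degree (legendre_deriv l m))"
      by (simp only: e(1) coeff_mult_degree_sum)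
    also have "\<dots> = (-1)^m * (fact (2*l) / fact (l-m))"
      unfolding e(2) coeff_legendre_deriv_top[OF assms] by (simp add: degree_legendre_weight coeff_legendre_weight_top)
    finally show ?thesis .
  qed
  have "poly_integral (legendre_deriv l m * (legendre_weight m * legendre_deriv l m)) = (-1)^(l+m) * poly_integral (rodrigues_base l * pderivs (l+m) (legendre_weight m * legendre_deriv l m))"
    unfolding legendre_deriv_def[of l m] by (rule poly_integral_by_parts_iter[OF vanishes_pm1_rodrigues_products[OF assms(1)]])
  also have "pderivs (l+m) (legendre_weight m * legendre_deriv l m) = [: fact (l+m) * ((-1)^m * (fact (2*l) / fact (l-m))) :]"
    using pderivs_eq_const[of "legendre_weight m * legendre_deriv l m" "l+m"] dg cf by simp
  also have "rodrigues_base l * [: fact (l+m) * ((-1)^m * (fact (2*l) / fact (l-m))) :] =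
      smult (fact (l+m) * ((-1)^m * (fact (2*l) / fact (l-m))) * (-1)^l) (legendre_weight l)"
    by (simp add: legendre_weight_eq mult.commute)
  finally show ?thesis
    by (simp add: poly_integral_smult poly_integral_legendre_weight power_add algebra_simps flip: power_mult_distrib)
qed

lemma sets_sph_dom: "sph_dom \<in> sets lborel"
proof -
  have "{0..pi} \<times> {0..<2*pi} \<in> sets (lborel \<Otimes>\<^sub>M lborel)" by (intro pair_measureI) auto
  then show ?thesis unfolding sph_dom_def lborel_prod by simp
qed

definition sph_integrable :: "(real \<Rightarrow> real \<Rightarrow> complex) \<Rightarrow> bool" where
  "sph_integrable F \<longleftrightarrow> set_integrable lborel sph_dom (\<lambda>p. F (fst p) (snd p) * complex_of_real (sin (fst p)))"

lemma sph_integrable_add: "sph_integrable F \<Longrightarrow> sph_integrable G \<Longrightarrow> sph_integrable (\<lambda>\<theta> \<phi>. F \<theta> \<phi> + G \<theta> \<phi>)"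
  unfolding sph_integrable_def by (simp add: distrib_right)

lemma sph_int_add: "sph_integrable F \<Longrightarrow> sph_integrable G \<Longrightarrow> sph_int (\<lambda>\<theta> \<phi>. F \<theta> \<phi> + G \<theta> \<phi>) = sph_int F + sph_int G"
  unfolding sph_integrable_def sph_int_def by (simp add: distrib_right set_integral_add)

lemma sph_integrable_cmult: "sph_integrable F \<Longrightarrow> sph_integrable (\<lambda>\<theta> \<phi>. c * F \<theta> \<phi>)"
  unfolding sph_integrable_def by (simp add: mult.assoc)

lemma sph_int_cmult: "sph_int (\<lambda>\<theta> \<phi>. c * F \<theta> \<phi>) = c * sph_int F"
  unfolding sph_int_def by (simp add: mult.assoc)

lemma sph_integrable_zero: "sph_integrable (\<lambda>\<theta> \<phi>. 0)"
  unfolding sph_integrable_def set_integrable_def by simp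

lemma sph_int_zero: "sph_int (\<lambda>\<theta> \<phi>. 0) = 0"
  unfolding sph_int_def by simp

lemma sph_integrable_sum: "finite I \<Longrightarrow> (\<And>i. i \<in> I \<Longrightarrow> sph_integrable (F i)) \<Longrightarrow> sph_integrable (\<lambda>\<theta> \<phi>. \<Sum>i\<in>I. F i \<theta> \<phi>)"
  by (induction I rule: finite_induct) (simp_all add: sph_integrable_zero sph_integrable_add)

lemma sph_int_sum: "finite I \<Longrightarrow> (\<And>i. i \<in> I \<Longrightarrow> sph_integrable (F i)) \<Longrightarrow> sph_int (\<lambda>\<theta> \<phi>. \<Sum>i\<in>I. F i \<theta> \<phi>) = (\<Sum>i\<in>I. sph_int (F i))"
proof (induction I rule: finite_induct)
  case empty then show ?case by (simp add: sph_int_zero)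
next
  case (insert x I)
  have "sph_int (\<lambda>\<theta> \<phi>. \<Sum>i\<in>insert x I. F i \<theta> \<phi>) = sph_int (\<lambda>\<theta> \<phi>. F x \<theta> \<phi> + (\<Sum>i\<in>I. F i \<theta> \<phi>))"
    using insert by simp
  also have "\<dots> = sph_int (F x) + sph_int (\<lambda>\<theta> \<phi>. \<Sum>i\<in>I. F i \<theta> \<phi>)"
    by (rule sph_int_add) (use insert in \<open>auto intro!: sph_integrable_sum\<close>)
  finally show ?case using insert by simp
qed

lemma sph_int_cong: "(\<And>\<theta> \<phi>. F \<theta> \<phi> = G \<theta> \<phi>) \<Longrightarrow> sph_int F = sph_int G"
  by (metis ext)

definition sph_box :: "(real \<times> real) set" where "sph_box = cbox (0,0) (pi, 2*pi)"

lemma sph_dom_subset_box: "sph_dom \<subseteq> sph_box"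
  unfolding sph_dom_def sph_box_def cbox_Pair_eq by auto

lemma sph_box_diff: "sph_box - sph_dom \<subseteq> {x. x \<bullet> (0,1) = 2*pi}"
  unfolding sph_dom_def sph_box_def cbox_Pair_eq by auto

lemma continuous_sph_integrable:
  assumes "continuous_on UNIV (\<lambda>p. F (fst p) (snd p))"
  shows "sph_integrable F"
proof -
  have c: "continuous_on sph_box (\<lambda>p. F (fst p) (snd p) * complex_of_real (sin (fst p)))"
    by (intro continuous_intros continuous_on_subset[OF assms]) auto
  have "set_integrable lborel sph_box (\<lambda>p. F (fst p) (snd p) * complex_of_real (sin (fst p)))"
    unfolding set_integrable_def by (rule borel_integrable_compact[OF _ c]) (simp add: sph_box_def)
  then show ?thesis unfolding sph_integrable_def
    by (rule set_integrable_subset[OF _ sets_sph_dom sph_dom_subset_box])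
qed

lemma sph_int_iterated:
  assumes "continuous_on UNIV (\<lambda>p. F (fst p) (snd p))"
  shows "sph_int F = integral {0..pi} (\<lambda>\<theta>. integral {0..2*pi} (\<lambda>\<phi>. F \<theta> \<phi> * complex_of_real (sin \<theta>)))"
proof -
  let ?G = "\<lambda>p. F (fst p) (snd p) * complex_of_real (sin (fst p))"
  have c: "continuous_on UNIV ?G"
    by (intro continuous_intros assms)
  have "sph_int F = integral sph_dom ?G"
    unfolding sph_int_def
    by (rule set_borel_integral_eq_integral(2)) (use continuous_sph_integrable[OF assms] in \<open>simp add: sph_integrable_def\<close>)
  also have "\<dots> = integral sph_box ?G"
  proof (rule integral_spike_set)
    have e: "{x \<in> sph_dom - sph_box. ?G x \<noteq> 0} = {}" using sph_dom_subset_box by auto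
    show "negligible {x \<in> sph_dom - sph_box. ?G x \<noteq> 0}" unfolding e by (rule negligible_empty)
    have "negligible {x::real\<times>real. x \<bullet> (0,1) = 2*pi}"
      by (rule negligible_standard_hyperplane) (simp add: Basis_prod_def)
    then show "negligible {x \<in> sph_box - sph_dom. ?G x \<noteq> 0}"
      by (rule negligible_subset) (use sph_box_diff in auto)
  qed
  also have "\<dots> = integral (cbox 0 pi) (\<lambda>x. integral (cbox 0 (2*pi)) (\<lambda>y. ?G (x,y)))"
    unfolding sph_box_def by (rule integral_prod_continuous) (rule continuous_on_subset[OF c], simp)
  finally show ?thesis by simp
qed

lemma sph_int_separable:
  assumes "continuous_on UNIV A" "continuous_on UNIV B"
  shows "sph_int (\<lambda>\<theta> \<phi>. A \<theta> * B \<phi>) = integral {0..pi} (\<lambda>\<theta>. A \<theta> * complex_of_real (sin \<theta>)) * integral {0..2*pi} B"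
proof -
  have c: "continuous_on UNIV (\<lambda>p. A (fst p) * B (snd p))"
    by (intro continuous_intros continuous_on_compose2[OF assms(1)] continuous_on_compose2[OF assms(2)]) auto
  have "sph_int (\<lambda>\<theta> \<phi>. A \<theta> * B \<phi>) = integral {0..pi} (\<lambda>\<theta>. integral {0..2*pi} (\<lambda>\<phi>. (A \<theta> * complex_of_real (sin \<theta>)) * B \<phi>))"
    unfolding sph_int_iterated[OF c] by (simp add: ac_simps)
  also have "\<dots> = integral {0..pi} (\<lambda>\<theta>. (A \<theta> * complex_of_real (sin \<theta>)) * integral {0..2*pi} B)"
    by (simp add: integral_mult_right)
  also have "\<dots> = integral {0..pi} (\<lambda>\<theta>. A \<theta> * complex_of_real (sin \<theta>)) * integral {0..2*pi} B"
    by (simp add: integral_mult_left)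
  finally show ?thesis .
qed

lemma integral_exp_i_mult:
  fixes k :: int
  shows "integral {0..2*pi} (\<lambda>\<phi>. exp (\<i> * of_int k * complex_of_real \<phi>)) = (if k = 0 then 2 * pi else 0)"
proof (cases "k = 0")
  case True then show ?thesis by (simp add: scaleR_conv_of_real)
next
  case False
  let ?f = "\<lambda>\<phi>::real. exp (\<i> * of_int k * complex_of_real \<phi>) / (\<i> * of_int k)"
  have d: "(?f has_vector_derivative exp (\<i> * of_int k * complex_of_real x)) (at x within {0..2*pi})" for x
  proof -
    have "((\<lambda>\<phi>::real. exp (\<i> * of_int k * complex_of_real \<phi>) / (\<i> * of_int k)) has_vector_derivative
          (exp (\<i> * of_int k * complex_of_real x) * (\<i> * of_int k * 1)) / (\<i> * of_int k)) (at x within {0..2*pi})"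
      by (auto intro!: derivative_eq_intros has_vector_derivative_real_field simp: )
    then show ?thesis using False by simp
  qed
  have "((\<lambda>\<phi>. exp (\<i> * of_int k * complex_of_real \<phi>)) has_integral ?f (2*pi) - ?f 0) {0..2*pi}"
    by (rule fundamental_theorem_of_calculus) (use d in auto)
  moreover have "exp (\<i> * of_int k * complex_of_real (2*pi)) = 1"
  proof -
    have e: "\<i> * of_int k * complex_of_real (2*pi) = complex_of_real (2 * real_of_int k * pi) * \<i>" by (simp add: mult_ac)
    show ?thesis unfolding e by (rule exp_integer_2pi) simp
  qed
  ultimately show ?thesis using False by (simp add: integral_unique)
qed

lemma integral_poly_cos_sin:
  "integral {0..pi} (\<lambda>\<theta>. complex_of_real (poly R (cos \<theta>)) * complex_of_real (sin \<theta>)) = complex_of_real (poly_integral R)"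
proof -
  obtain F where F: "pderiv F = R" using ex_poly_antiderivative by blast
  have d: "((\<lambda>\<theta>. - poly F (cos \<theta>)) has_vector_derivative poly R (cos x) * sin x) (at x within {0..pi})" for x
  proof -
    have "((\<lambda>\<theta>. - poly F (cos \<theta>)) has_real_derivative - (poly (pderiv F) (cos x) * (- sin x))) (at x within {0..pi})"
      by (auto intro!: derivative_eq_intros)
    then show ?thesis using F by (simp add: has_real_derivative_iff_has_vector_derivative)
  qed
  have "((\<lambda>\<theta>. poly R (cos \<theta>) * sin \<theta>) has_integral (- poly F (cos pi)) - (- poly F (cos 0))) {0..pi}"
    by (rule fundamental_theorem_of_calculus) (use d in auto)
  then have "((\<lambda>\<theta>. poly R (cos \<theta>) * sin \<theta>) has_integral poly_integral R) {0..pi}"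
    using poly_integral_eq[OF F] by simp
  then have "((\<lambda>\<theta>. complex_of_real (poly R (cos \<theta>) * sin \<theta>)) has_integral complex_of_real (poly_integral R)) {0..pi}"
    by (rule has_integral_of_real)
  then show ?thesis by (simp add: integral_unique)
qed

section \<open>Orthonormality of the spherical harmonics\<close>

definition abs_ord :: "int \<Rightarrow> nat" where "abs_ord m = nat \<bar>m\<bar>"

definition legendre_const :: "nat \<Rightarrow> int \<Rightarrow> real" where
  "legendre_const l m = (if 0 \<le> m then (-1)^(abs_ord m) / (2^l * fact l)
              else (-1)^(abs_ord m) * fact (l - abs_ord m) / fact (l + abs_ord m) * ((-1)^(abs_ord m) / (2^l * fact l)))"

definition harm_const :: "nat \<Rightarrow> int \<Rightarrow> real" where "harm_const l m = sh_norm l m * legendre_const l m"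

definition harm_theta :: "nat \<Rightarrow> int \<Rightarrow> real \<Rightarrow> real" where
  "harm_theta l m \<theta> = sh_norm l m * assoc_legendre l m (cos \<theta>)"

lemma assoc_legendre_legendre_deriv:
  "assoc_legendre l m x = legendre_const l m * sqrt (1 - x\<^sup>2) ^ (abs_ord m) * poly (legendre_deriv l (abs_ord m)) x"
  unfolding assoc_legendre_def assoc_legendre_nonneg_def legendre_const_def legendre_deriv_def rodrigues_base_def abs_ord_def
  by (auto simp: nat_minus_as_int)

lemma harm_theta_legendre_deriv: "harm_theta l m \<theta> = harm_const l m * (sqrt (1 - (cos \<theta>)\<^sup>2) ^ (abs_ord m) * poly (legendre_deriv l (abs_ord m)) (cos \<theta>))"
  unfolding harm_theta_def harm_const_def assoc_legendre_legendre_deriv by (simp add: mult_ac)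

lemma sph_harm_theta: "sph_harm l m \<theta> \<phi> = complex_of_real (harm_theta l m \<theta>) * exp (\<i> * of_int m * complex_of_real \<phi>)"
  unfolding sph_harm_def harm_theta_def by simp

lemma continuous_harm_theta: "continuous_on UNIV (harm_theta l m)"
  unfolding harm_theta_legendre_deriv[abs_def] by (intro continuous_intros)

lemma continuous_sph_harm: "continuous_on UNIV (\<lambda>p. sph_harm l m (fst p) (snd p))"
  unfolding sph_harm_theta
  by (intro continuous_intros continuous_on_compose2[OF continuous_harm_theta]) auto

lemma sh_norm_pos: "sh_norm l m > 0"
  unfolding sh_norm_def by (intro real_sqrt_gt_zero mult_pos_pos divide_pos_pos) auto

lemma legendre_const_nonzero: "legendre_const l m \<noteq> 0" unfolding legendre_const_def by simp

lemma harm_const_nonzero: "harm_const l m \<noteq> 0" unfolding harm_const_def using sh_norm_pos[of l m] legendre_const_nonzero[of l m] by simp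

lemma sh_norm_sq: "(sh_norm l m)^2 = (2 * real l + 1) / (4 * pi) * (fact (nat (int l - m)) / fact (nat (int l + m)))"
  unfolding sh_norm_def by (intro real_sqrt_pow2 mult_nonneg_nonneg divide_nonneg_nonneg) auto

lemma harm_const_sq:
  assumes "abs_ord m \<le> l"
  shows "(harm_const l m)^2 = (2 * real l + 1) / (4 * pi) * (fact (l - abs_ord m) / fact (l + abs_ord m)) / (2^l * fact l)^2"
proof (cases "0 \<le> m")
  case True
  then have e: "nat (int l - m) = l - abs_ord m" "nat (int l + m) = l + abs_ord m" using assms by (auto simp: abs_ord_def)
  show ?thesis unfolding harm_const_def power_mult_distrib sh_norm_sq e using True
    by (simp add: legendre_const_def power_divide power_mult_distrib flip: power_mult)
next
  case False
  then have e: "nat (int l - m) = l + abs_ord m" "nat (int l + m) = l - abs_ord m" using assms by (auto simp: abs_ord_def)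
  have p1: "(fact (l - abs_ord m) :: real) > 0" "(fact (l + abs_ord m) :: real) > 0" by simp_all
  have "(harm_const l m)^2 = (2 * real l + 1) / (4 * pi) * (fact (l + abs_ord m) / fact (l - abs_ord m)) *
      ((fact (l - abs_ord m) / fact (l + abs_ord m))^2 * (1 / (2^l * fact l))^2)"
    unfolding harm_const_def power_mult_distrib sh_norm_sq e using False
    by (simp add: legendre_const_def power_divide power_mult_distrib flip: power_mult)
  also have "\<dots> = (2 * real l + 1) / (4 * pi) * (fact (l - abs_ord m) / fact (l + abs_ord m)) / (2^l * fact l)^2"
    using p1 by (simp add: field_simps power2_eq_square)
  finally show ?thesis .
qed

lemma harm_const_neg_order:
  assumes "\<mu> \<le> l"
  shows "harm_const l (- int \<mu>) = (-1)^\<mu> * harm_const l (int \<mu>)"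
proof (cases "\<mu> = 0")
  case True then show ?thesis by simp
next
  case False
  define A :: real where "A = fact (l + \<mu>)"
  define B :: real where "B = fact (l - \<mu>)"
  define c :: real where "c = (2 * real l + 1) / (4 * pi)"
  have pos: "A > 0" "B > 0" "c > 0" unfolding A_def B_def c_def by simp_all
  have e: "nat (int l - - int \<mu>) = l + \<mu>" "nat (int l + - int \<mu>) = l - \<mu>"
          "nat (int l - int \<mu>) = l - \<mu>" "nat (int l + int \<mu>) = l + \<mu>" using assms by auto
  have s1: "sh_norm l (- int \<mu>) = sqrt (c * (A / B))" unfolding sh_norm_def e A_def B_def c_def ..
  have s2: "sh_norm l (int \<mu>) = sqrt (c * (B / A))" unfolding sh_norm_def e A_def B_def c_def ..
  have "sqrt (c * (A / B)) = sqrt (c * (B / A) * (A / B)^2)"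
    using pos by (simp add: field_simps power2_eq_square)
  also have "\<dots> = sqrt (c * (B / A)) * sqrt ((A / B)^2)"
    by (rule real_sqrt_mult)
  also have "sqrt ((A / B)^2) = A / B" using pos by simp
  finally have s: "sh_norm l (- int \<mu>) = sh_norm l (int \<mu>) * (A / B)" using s1 s2 by simp
  have k: "legendre_const l (- int \<mu>) = (-1)^\<mu> * (B / A) * legendre_const l (int \<mu>)"
    using False unfolding legendre_const_def abs_ord_def A_def B_def by simp
  show ?thesis unfolding harm_const_def s k using pos by (simp add: field_simps)
qed

lemma harm_theta_neg_order:
  assumes "abs_ord m \<le> l"
  shows "harm_theta l (- m) \<theta> = (-1)^(abs_ord m) * harm_theta l m \<theta>"
proof (cases "0 \<le> m")
  case True
  then have m: "m = int (abs_ord m)" by (simp add: abs_ord_def)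
  have "abs_ord (- m) = abs_ord m" by (simp add: abs_ord_def)
  then show ?thesis unfolding harm_theta_legendre_deriv using harm_const_neg_order[OF assms] m by (metis mult.assoc)
next
  case False
  then have m: "- m = int (abs_ord m)" by (simp add: abs_ord_def)
  have m2: "m = - int (abs_ord m)" using m by simp
  have mm: "abs_ord (- m) = abs_ord m" by (simp add: abs_ord_def)
  have c1: "harm_const l m = (-1)^(abs_ord m) * harm_const l (- m)" using harm_const_neg_order[OF assms] m m2 by (metis minus_minus)
  have sq: "(-1::real)^n * (-1)^n = 1" for n by (simp flip: power_add mult_2)
  have "harm_const l (-m) = (-1)^(abs_ord m) * harm_const l m"
    unfolding c1 mult.assoc[symmetric] sq by simp
  then show ?thesis unfolding harm_theta_legendre_deriv mm by (simp add: mult.assoc)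
qed

lemma sqrt_pow_even:
  fixes x :: real
  assumes "x^2 \<le> 1"
  shows "sqrt (1 - x^2) ^ (2*n) = (1 - x^2)^n"
  using assms by (simp add: power_mult)

lemma cos_sq_le: "(cos (\<theta>::real))^2 \<le> 1" using abs_cos_le_one[of \<theta>] by (simp add: abs_square_le_1)

lemma harm_theta_mult_same_order:
  "harm_theta l m \<theta> * harm_theta l' m \<theta> = poly (smult (harm_const l m * harm_const l' m) (legendre_deriv l (abs_ord m) * (legendre_weight (abs_ord m) * legendre_deriv l' (abs_ord m)))) (cos \<theta>)"
proof -
  have "sqrt (1 - (cos \<theta>)\<^sup>2) ^ abs_ord m * sqrt (1 - (cos \<theta>)\<^sup>2) ^ abs_ord m = sqrt (1 - (cos \<theta>)\<^sup>2) ^ (2 * abs_ord m)"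
    by (simp add: mult_2 power_add)
  also have "\<dots> = poly (legendre_weight (abs_ord m)) (cos \<theta>)" using sqrt_pow_even[OF cos_sq_le] by (simp add: poly_legendre_weight)
  finally have e: "sqrt (1 - (cos \<theta>)\<^sup>2) ^ abs_ord m * sqrt (1 - (cos \<theta>)\<^sup>2) ^ abs_ord m = poly (legendre_weight (abs_ord m)) (cos \<theta>)" .
  show ?thesis unfolding harm_theta_legendre_deriv using e
    by (simp add: mult_ac)
qed

lemma integral_harm_theta_mult:
  "integral {0..pi} (\<lambda>\<theta>. complex_of_real (harm_theta l m \<theta> * harm_theta l' m \<theta>) * complex_of_real (sin \<theta>)) =
   complex_of_real (harm_const l m * harm_const l' m * poly_integral (legendre_deriv l (abs_ord m) * (legendre_weight (abs_ord m) * legendre_deriv l' (abs_ord m))))"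
  unfolding harm_theta_mult_same_order integral_poly_cos_sin by (simp add: poly_integral_smult)

lemma harm_const_normalizes:
  assumes "abs_ord m \<le> l"
  shows "(harm_const l m)^2 * poly_integral (legendre_deriv l (abs_ord m) * (legendre_weight (abs_ord m) * legendre_deriv l (abs_ord m))) * (2 * pi) = 1"
proof -
  have e1: "(2::real)^(2*l+1) = 2 * (2^l)^2" by (simp add: power_add power_mult[symmetric] mult.commute)
  have e2: "(fact (2*l+1) :: real) = (2 * real l + 1) * fact (2*l)" by (simp add: fact_Suc)
  have cancel: "u/(4*p) * (a/b) / (P*F)^2 * (b*T/a * (2*P^2*F^2/(u*T))) * (2*p) = 1"
    if "a > 0" "b > 0" "F > 0" "T > 0" "P > 0" "p > 0" "u > 0" for a b F T P p u :: real
    using that by (simp add: field_simps power2_eq_square)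
  show ?thesis unfolding harm_const_sq[OF assms] legendre_deriv_norm[OF assms] e1 e2
    by (rule cancel) simp_all
qed

lemma sph_harm_mult_cnj:
  "sph_harm l m \<theta> \<phi> * cnj (sph_harm l' m' \<theta> \<phi>) =
   complex_of_real (harm_theta l m \<theta> * harm_theta l' m' \<theta>) * exp (\<i> * of_int (m - m') * complex_of_real \<phi>)"
proof -
  have c: "cnj (complex_of_real (harm_theta l' m' \<theta>) * exp (\<i> * of_int m' * complex_of_real \<phi>)) =
      complex_of_real (harm_theta l' m' \<theta>) * exp (- (\<i> * of_int m' * complex_of_real \<phi>))"
    by (simp add: exp_cnj)
  have e: "exp (\<i> * of_int m * complex_of_real \<phi>) * exp (- (\<i> * of_int m' * complex_of_real \<phi>)) =
       exp (\<i> * of_int (m - m') * complex_of_real \<phi>)"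
    by (simp add: exp_add[symmetric] algebra_simps)
  show ?thesis unfolding sph_harm_theta c of_real_mult e[symmetric] by (simp only: mult_ac)
qed

lemma integral_harm_theta_same_order:
  assumes "abs_ord m \<le> l" "abs_ord m \<le> l'"
  shows "integral {0..pi} (\<lambda>\<theta>. complex_of_real (harm_theta l m \<theta> * harm_theta l' m \<theta>) * complex_of_real (sin \<theta>)) =
         (if l = l' then complex_of_real (1 / (2 * pi)) else 0)"
proof (cases "l = l'")
  case True
  have "(harm_const l m)^2 * poly_integral (legendre_deriv l (abs_ord m) * (legendre_weight (abs_ord m) * legendre_deriv l (abs_ord m)))
      = 1 / (2 * pi)"
    using harm_const_normalizes[OF assms(1)] by (simp add: field_simps)
  then show ?thesis unfolding integral_harm_theta_mult True by (simp add: power2_eq_square)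
next
  case False
  have "poly_integral (legendre_deriv l (abs_ord m) * (legendre_weight (abs_ord m) * legendre_deriv l' (abs_ord m))) = 0"
  proof (cases "l' < l")
    case True then show ?thesis using legendre_deriv_orth assms by simp
  next
    case False
    with \<open>l \<noteq> l'\<close> have "l < l'" by simp
    then show ?thesis using legendre_deriv_orth[of "abs_ord m" l' l] assms by (simp add: mult_ac)
  qed
  then show ?thesis unfolding integral_harm_theta_mult using False by simp
qed

lemma sph_harm_orth:
  assumes "abs_ord m \<le> l" "abs_ord m' \<le> l'"
  shows "sph_inner (sph_harm l m) (sph_harm l' m') = (if l = l' \<and> m = m' then 1 else 0)"
proof -
  have "sph_inner (sph_harm l m) (sph_harm l' m') =
        sph_int (\<lambda>\<theta> \<phi>. complex_of_real (harm_theta l m \<theta> * harm_theta l' m' \<theta>) * exp (\<i> * of_int (m - m') * complex_of_real \<phi>))"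
    unfolding sph_inner_def sph_harm_mult_cnj ..
  also have "\<dots> = integral {0..pi} (\<lambda>\<theta>. complex_of_real (harm_theta l m \<theta> * harm_theta l' m' \<theta>) * complex_of_real (sin \<theta>)) *
      integral {0..2*pi} (\<lambda>\<phi>. exp (\<i> * of_int (m - m') * complex_of_real \<phi>))"
    by (rule sph_int_separable) (intro continuous_intros continuous_on_compose2[OF continuous_harm_theta] | simp)+
  also have "\<dots> = (if l = l' \<and> m = m' then 1 else 0)"
  proof (cases "m = m'")
    case False then show ?thesis by (subst integral_exp_i_mult) simp
  next
    case True
    then show ?thesis using integral_harm_theta_same_order[of m l l'] assms
      by (simp add: integral_exp_i_mult scaleR_conv_of_real)
  qed
  finally show ?thesis .
qed

lemma sh_deg_bounds: "(sh_deg n)^2 \<le> n" "n < (Suc (sh_deg n))^2"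
  unfolding sh_deg_def by (rule floor_sqrt_power2_le, rule Suc_floor_sqrt_power2_gt)

lemma sh_ord_bound: "abs_ord (sh_ord n) \<le> sh_deg n"
proof -
  have a: "(sh_deg n)^2 \<le> n" "n < (Suc (sh_deg n))^2" by (rule sh_deg_bounds)+
  have a1: "int ((sh_deg n)^2) \<le> int n" using a(1) by linarith
  have a2: "int n < int ((Suc (sh_deg n))^2)" using a(2) by linarith
  have "\<bar>int n - (int (sh_deg n))\<^sup>2 - int (sh_deg n)\<bar> \<le> int (sh_deg n)"
    using a1 a2 by (simp add: power2_eq_square algebra_simps)
  then show ?thesis unfolding abs_ord_def sh_ord_def by simp
qed

lemma sh_idx_deg_ord: "sh_idx (sh_deg n) (sh_ord n) = n"
  unfolding sh_idx_def sh_ord_def by simp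

lemma int_sh_idx:
  assumes "abs_ord m \<le> l" shows "int (sh_idx l m) = (int l)^2 + int l + m"
proof -
  have m: "- int l \<le> m" using assms unfolding abs_ord_def by auto
  have "0 \<le> (int l)^2" by simp
  then have "0 \<le> (int l)^2 + int l + m" using m by linarith
  then show ?thesis unfolding sh_idx_def by simp
qed

lemma sh_deg_idx:
  assumes "abs_ord m \<le> l" shows "sh_deg (sh_idx l m) = l"
proof -
  have m: "- int l \<le> m" "m \<le> int l" using assms unfolding abs_ord_def by auto
  have e: "int (sh_idx l m) = (int l)^2 + int l + m" by (rule int_sh_idx[OF assms])
  have "int (l^2) \<le> int (sh_idx l m)" unfolding e using m by simp
  then have b1: "l^2 \<le> sh_idx l m" by (simp only: of_nat_le_iff)
  have "int (sh_idx l m) < int ((Suc l)^2)" unfolding e using m by (simp add: power2_eq_square algebra_simps)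
  then have b2: "sh_idx l m < (Suc l)^2" by (simp only: of_nat_less_iff)
  show ?thesis unfolding sh_deg_def by (rule floor_sqrt_unique[OF b1 b2])
qed

lemma sh_ord_idx:
  assumes "abs_ord m \<le> l" shows "sh_ord (sh_idx l m) = m"
  unfolding sh_ord_def sh_deg_idx[OF assms] int_sh_idx[OF assms] by simp

lemma Yn_sh_idx: "abs_ord m \<le> l \<Longrightarrow> Yn (sh_idx l m) = sph_harm l m"
  unfolding Yn_def by (simp add: sh_deg_idx sh_ord_idx)

lemma Yn_orthonormal: "sph_inner (Yn a) (Yn b) = (if a = b then 1 else 0)"
proof -
  have "sph_inner (Yn a) (Yn b) = (if sh_deg a = sh_deg b \<and> sh_ord a = sh_ord b then 1 else 0)"
    unfolding Yn_def by (rule sph_harm_orth[OF sh_ord_bound sh_ord_bound])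
  moreover have "(sh_deg a = sh_deg b \<and> sh_ord a = sh_ord b) \<longleftrightarrow> a = b"
    using sh_idx_deg_ord[of a] sh_idx_deg_ord[of b] by metis
  ultimately show ?thesis by simp
qed

lemma le_band_index_iff: "r \<le> L^2 + 2*L \<longleftrightarrow> sh_deg r \<le> L"
proof
  assume "r \<le> L^2 + 2*L"
  then have r: "r < (Suc L)^2" by (simp add: power2_eq_square)
  show "sh_deg r \<le> L" unfolding sh_deg_def
  proof (rule floor_sqrt_leI)
    fix z :: nat assume "z^2 \<le> r"
    then have "z^2 < (Suc L)^2" using r by linarith
    then have "z < Suc L" by (rule power_less_imp_less_base) simp
    then show "z \<le> L" by simp
  qed
next
  assume "sh_deg r \<le> L"
  then have "(Suc (sh_deg r))^2 \<le> (Suc L)^2" by (intro power_mono) simp_all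
  then have "r < (Suc L)^2" using sh_deg_bounds(2)[of r] by linarith
  then show "r \<le> L^2 + 2*L" by (simp add: power2_eq_square)
qed

lemma continuous_Yn: "continuous_on UNIV (\<lambda>p. Yn n (fst p) (snd p))"
  unfolding Yn_def by (rule continuous_sph_harm)

section \<open>Products of spherical harmonics\<close>

lemma coeff_legendre_deriv_top_nonzero: assumes "m \<le> l" shows "coeff (legendre_deriv l m) (l - m) \<noteq> 0"
  using coeff_legendre_deriv_top[OF assms] by simp


lemma degree_le_pred:
  assumes "degree P \<le> Suc d" "coeff P (Suc d) = 0" shows "degree P \<le> d"
proof (rule degree_le, intro allI impI)
  fix i assume "d < i"
  then show "coeff P i = 0" using assms
    by (metis Suc_lessI coeff_eq_0 le_less_trans)
qed

lemma legendre_deriv_basis: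
  "degree (P::real poly) \<le> d \<Longrightarrow> \<exists>\<beta>. P = (\<Sum>l\<in>{\<kappa>..\<kappa>+d}. smult (\<beta> l) (legendre_deriv l \<kappa>))"
proof (induction d arbitrary: P)
  case 0
  define q where "q = coeff (legendre_deriv \<kappa> \<kappa>) 0"
  have q: "q \<noteq> 0" using coeff_legendre_deriv_top_nonzero[of \<kappa> \<kappa>] unfolding q_def by simp
  have Qk: "legendre_deriv \<kappa> \<kappa> = [:q:]" using degree_legendre_deriv[of \<kappa> \<kappa>] unfolding q_def
    by (metis degree_0_id diff_self_eq_0)
  have P: "P = [:coeff P 0:]" using 0 by (metis degree_0_id le_zero_eq)
  have "P = smult (coeff P 0 / q) (legendre_deriv \<kappa> \<kappa>)" unfolding Qk using q P by simp
  then show ?case by (intro exI[of _ "\<lambda>_. coeff P 0 / q"]) simp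
next
  case (Suc d)
  define l where "l = \<kappa> + Suc d"
  define q where "q = coeff (legendre_deriv l \<kappa>) (Suc d)"
  have q: "q \<noteq> 0" using coeff_legendre_deriv_top_nonzero[of \<kappa> l] unfolding q_def l_def by simp
  have dQ: "degree (legendre_deriv l \<kappa>) = Suc d" unfolding l_def by (simp add: degree_legendre_deriv)
  define P' where "P' = P - smult (coeff P (Suc d) / q) (legendre_deriv l \<kappa>)"
  have "degree P' \<le> Suc d" unfolding P'_def using Suc.prems dQ
    by (intro degree_diff_le) (auto intro: order.trans[OF degree_smult_le])
  moreover have "coeff P' (Suc d) = 0" unfolding P'_def q_def using q q_def by simp
  ultimately have "degree P' \<le> d" by (rule degree_le_pred)
  then obtain \<beta> where \<beta>: "P' = (\<Sum>l\<in>{\<kappa>..\<kappa>+d}. smult (\<beta> l) (legendre_deriv l \<kappa>))" using Suc.IH by blast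
  define \<beta>' where "\<beta>' = \<beta>(l := coeff P (Suc d) / q)"
  have "{\<kappa>..\<kappa> + Suc d} = insert l {\<kappa>..\<kappa>+d}" unfolding l_def by auto
  moreover have "l \<notin> {\<kappa>..\<kappa>+d}" unfolding l_def by simp
  ultimately have "(\<Sum>i\<in>{\<kappa>..\<kappa>+Suc d}. smult (\<beta>' i) (legendre_deriv i \<kappa>)) =
      smult (coeff P (Suc d) / q) (legendre_deriv l \<kappa>) + (\<Sum>i\<in>{\<kappa>..\<kappa>+d}. smult (\<beta>' i) (legendre_deriv i \<kappa>))"
    by (simp add: \<beta>'_def)
  also have "(\<Sum>i\<in>{\<kappa>..\<kappa>+d}. smult (\<beta>' i) (legendre_deriv i \<kappa>)) = P'"
    unfolding \<beta> \<beta>'_def using \<open>l \<notin> {\<kappa>..\<kappa>+d}\<close> by (intro sum.cong) auto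
  finally show ?case unfolding P'_def by (intro exI[of _ \<beta>']) simp
qed

lemma abs_ord_add_parity: "\<exists>j. abs_ord m1 + abs_ord m2 = abs_ord (m2 - m1) + 2 * j"
proof -
  have "\<exists>j::int. \<bar>m1\<bar> + \<bar>m2\<bar> = \<bar>m2 - m1\<bar> + 2 * j"
    unfolding abs_if by presburger
  then obtain j :: int where j: "\<bar>m1\<bar> + \<bar>m2\<bar> = \<bar>m2 - m1\<bar> + 2 * j" by blast
  have "j \<ge> 0" using j by linarith
  then have "int (abs_ord m1 + abs_ord m2) = int (abs_ord (m2 - m1) + 2 * nat j)" unfolding abs_ord_def using j by simp
  then show ?thesis by (intro exI[of _ "nat j"]) (simp only: of_nat_eq_iff)
qed

lemma abs_ord_diff_le: "abs_ord (m2 - m1) \<le> abs_ord m1 + abs_ord m2"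
  unfolding abs_ord_def by linarith

abbreviation sin_abs :: "real \<Rightarrow> real" where "sin_abs \<theta> \<equiv> sqrt (1 - (cos \<theta>)\<^sup>2)"

lemma legendre_deriv_harm_theta:
  assumes "abs_ord k \<le> l"
  shows "sin_abs \<theta> ^ (abs_ord k) * poly (legendre_deriv l (abs_ord k)) (cos \<theta>) = harm_theta l k \<theta> / harm_const l k"
  unfolding harm_theta_legendre_deriv using harm_const_nonzero[of l k] by simp

text \<open>The factor |sin \<theta>|^(|m1| + |m2|) splits into |sin \<theta>|^|m2 - m1| times a polynomial in cos \<theta>,
  which is then expanded in the basis of Rodrigues derivatives of order |m2 - m1|.\<close>
lemma harm_theta_mult_expansion:
  assumes a1: "abs_ord m1 \<le> l1" and a2: "abs_ord m2 \<le> l2"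
  shows "\<exists>\<gamma>. \<forall>\<theta>. harm_theta l2 m2 \<theta> * harm_theta l1 m1 \<theta> =
            (\<Sum>l\<in>{abs_ord (m2 - m1)..l1+l2}. \<gamma> l * harm_theta l (m2 - m1) \<theta>)"
proof -
  define k where "k = m2 - m1"
  define \<kappa> where "\<kappa> = abs_ord k"
  obtain j where j: "abs_ord m1 + abs_ord m2 = \<kappa> + 2 * j" using abs_ord_add_parity unfolding \<kappa>_def k_def by blast
  have kL: "\<kappa> \<le> l1 + l2" using abs_ord_diff_le[of m2 m1] a1 a2 unfolding \<kappa>_def k_def by linarith
  define P where "P = smult (harm_const l2 m2 * harm_const l1 m1) (legendre_weight j * (legendre_deriv l2 (abs_ord m2) * legendre_deriv l1 (abs_ord m1)))"
  define d where "d = l1 + l2 - \<kappa>"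
  have "degree P \<le> degree (legendre_weight j * (legendre_deriv l2 (abs_ord m2) * legendre_deriv l1 (abs_ord m1)))"
    unfolding P_def by (rule degree_smult_le)
  also have "\<dots> \<le> degree (legendre_weight j) + (degree (legendre_deriv l2 (abs_ord m2)) + degree (legendre_deriv l1 (abs_ord m1)))"
    by (intro order.trans[OF degree_mult_le] add_left_mono degree_mult_le)
  also have "\<dots> = d" unfolding d_def using j a1 a2 by (simp add: degree_legendre_weight degree_legendre_deriv)
  finally obtain \<beta> where \<beta>: "P = (\<Sum>l\<in>{\<kappa>..\<kappa>+d}. smult (\<beta> l) (legendre_deriv l \<kappa>))" using legendre_deriv_basis by blast
  have kd: "\<kappa> + d = l1 + l2" unfolding d_def using kL by simp
  have "harm_theta l2 m2 \<theta> * harm_theta l1 m1 \<theta> = (\<Sum>l\<in>{\<kappa>..l1+l2}. \<beta> l / harm_const l k * harm_theta l k \<theta>)" for \<theta>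
  proof -
    have "sin_abs \<theta> ^ (abs_ord m2) * sin_abs \<theta> ^ (abs_ord m1) = sin_abs \<theta> ^ \<kappa> * sin_abs \<theta> ^ (2 * j)"
      by (simp add: power_add[symmetric] j add.commute)
    also have "sin_abs \<theta> ^ (2 * j) = poly (legendre_weight j) (cos \<theta>)" using sqrt_pow_even[OF cos_sq_le] by (simp add: poly_legendre_weight)
    finally have e: "sin_abs \<theta> ^ (abs_ord m2) * sin_abs \<theta> ^ (abs_ord m1) = sin_abs \<theta> ^ \<kappa> * poly (legendre_weight j) (cos \<theta>)" .
    have "harm_theta l2 m2 \<theta> * harm_theta l1 m1 \<theta> = sin_abs \<theta> ^ \<kappa> * poly P (cos \<theta>)"
      unfolding harm_theta_legendre_deriv P_def using e by (simp add: mult_ac)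
    also have "\<dots> = (\<Sum>l\<in>{\<kappa>..l1+l2}. \<beta> l * (sin_abs \<theta> ^ \<kappa> * poly (legendre_deriv l \<kappa>) (cos \<theta>)))"
      unfolding \<beta> kd poly_sum by (simp add: sum_distrib_left mult_ac)
    also have "\<dots> = (\<Sum>l\<in>{\<kappa>..l1+l2}. \<beta> l / harm_const l k * harm_theta l k \<theta>)"
      by (intro sum.cong refl) (use legendre_deriv_harm_theta[of k] in \<open>simp add: \<kappa>_def\<close>)
    finally show ?thesis .
  qed
  then show ?thesis unfolding \<kappa>_def k_def by (intro exI[of _ "\<lambda>l. \<beta> l / harm_const l (m2 - m1)"]) simp
qed

lemma sph_harm_cnj_mult_expansion:
  assumes "abs_ord m1 \<le> l1" "abs_ord m2 \<le> l2"
  shows "\<exists>\<gamma>. \<forall>\<theta> \<phi>. cnj (sph_harm l1 m1 \<theta> \<phi>) * sph_harm l2 m2 \<theta> \<phi> =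
            (\<Sum>l\<in>{abs_ord (m2 - m1)..l1+l2}. \<gamma> l * sph_harm l (m2 - m1) \<theta> \<phi>)"
proof -
  obtain \<gamma> where \<gamma>: "\<And>\<theta>. harm_theta l2 m2 \<theta> * harm_theta l1 m1 \<theta> =
      (\<Sum>l\<in>{abs_ord (m2 - m1)..l1+l2}. \<gamma> l * harm_theta l (m2 - m1) \<theta>)"
    using harm_theta_mult_expansion[OF assms] by blast
  have "cnj (sph_harm l1 m1 \<theta> \<phi>) * sph_harm l2 m2 \<theta> \<phi> =
      (\<Sum>l\<in>{abs_ord (m2 - m1)..l1+l2}. complex_of_real (\<gamma> l) * sph_harm l (m2 - m1) \<theta> \<phi>)" for \<theta> \<phi>
  proof -
    have "cnj (sph_harm l1 m1 \<theta> \<phi>) * sph_harm l2 m2 \<theta> \<phi> =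
        complex_of_real (harm_theta l2 m2 \<theta> * harm_theta l1 m1 \<theta>) * exp (\<i> * of_int (m2 - m1) * complex_of_real \<phi>)"
      unfolding sph_harm_mult_cnj[symmetric] by (simp add: mult.commute)
    then show ?thesis unfolding \<gamma> of_real_sum sum_distrib_right sph_harm_theta by (simp add: mult_ac)
  qed
  then show ?thesis by (intro exI[of _ "\<lambda>l. complex_of_real (\<gamma> l)"]) simp
qed

lemma Yn_cnj_mult_expansion: "\<exists>S \<alpha>. finite S \<and> (\<forall>\<theta> \<phi>. cnj (Yn a \<theta> \<phi>) * Yn b \<theta> \<phi> = (\<Sum>c\<in>S. \<alpha> c * Yn c \<theta> \<phi>))"
proof -
  define l1 m1 l2 m2 where "l1 = sh_deg a" "m1 = sh_ord a" "l2 = sh_deg b" "m2 = sh_ord b"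
  have a1: "abs_ord m1 \<le> l1" and a2: "abs_ord m2 \<le> l2" unfolding l1_m1_l2_m2_def by (rule sh_ord_bound)+
  define k where "k = m2 - m1"
  obtain \<gamma> where \<gamma>: "\<And>\<theta> \<phi>. cnj (sph_harm l1 m1 \<theta> \<phi>) * sph_harm l2 m2 \<theta> \<phi> =
            (\<Sum>l\<in>{abs_ord k..l1+l2}. \<gamma> l * sph_harm l k \<theta> \<phi>)"
    using sph_harm_cnj_mult_expansion[OF a1 a2] unfolding k_def by blast
  define S where "S = (\<lambda>l. sh_idx l k) ` {abs_ord k..l1+l2}"
  have inj: "inj_on (\<lambda>l. sh_idx l k) {abs_ord k..l1+l2}"
    by (rule inj_on_inverseI[of _ sh_deg]) (simp add: sh_deg_idx)
  show ?thesis
  proof (intro exI conjI allI)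
    show "finite S" unfolding S_def by simp
    fix \<theta> \<phi>
    have "(\<Sum>c\<in>S. \<gamma> (sh_deg c) * Yn c \<theta> \<phi>) = (\<Sum>l\<in>{abs_ord k..l1+l2}. \<gamma> (sh_deg (sh_idx l k)) * Yn (sh_idx l k) \<theta> \<phi>)"
      unfolding S_def by (rule sum.reindex[OF inj, unfolded comp_def])
    also have "\<dots> = (\<Sum>l\<in>{abs_ord k..l1+l2}. \<gamma> l * sph_harm l k \<theta> \<phi>)"
      by (intro sum.cong refl) (simp add: sh_deg_idx Yn_sh_idx)
    finally show "cnj (Yn a \<theta> \<phi>) * Yn b \<theta> \<phi> = (\<Sum>c\<in>S. \<gamma> (sh_deg c) * Yn c \<theta> \<phi>)"
      unfolding Yn_def l1_m1_l2_m2_def[symmetric] \<gamma> by simp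
  qed
qed

lemma sph_integrable_Yn_cnj: "sph_integrable (\<lambda>\<theta> \<phi>. Yn c \<theta> \<phi> * cnj (Yn c' \<theta> \<phi>))"
  by (rule continuous_sph_integrable) (intro continuous_intros continuous_Yn)

lemma triple_eq_expansion_coeff:
  assumes "finite S" "\<And>\<theta> \<phi>. cnj (Yn a \<theta> \<phi>) * Yn b \<theta> \<phi> = (\<Sum>c\<in>S. \<alpha> c * Yn c \<theta> \<phi>)"
  shows "triple c a b = (if c \<in> S then cnj (\<alpha> c) else 0)"
proof -
  have "triple c a b = sph_int (\<lambda>\<theta> \<phi>. \<Sum>c'\<in>S. cnj (\<alpha> c') * (Yn c \<theta> \<phi> * cnj (Yn c' \<theta> \<phi>)))"
    unfolding triple_def
  proof (rule sph_int_cong)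
    fix \<theta> \<phi>
    have "Yn a \<theta> \<phi> * Yn c \<theta> \<phi> * cnj (Yn b \<theta> \<phi>) = Yn c \<theta> \<phi> * cnj (cnj (Yn a \<theta> \<phi>) * Yn b \<theta> \<phi>)"
      by simp
    also have "\<dots> = (\<Sum>c'\<in>S. cnj (\<alpha> c') * (Yn c \<theta> \<phi> * cnj (Yn c' \<theta> \<phi>)))"
      unfolding assms(2) by (simp add: sum_distrib_left mult_ac)
    finally show "Yn a \<theta> \<phi> * Yn c \<theta> \<phi> * cnj (Yn b \<theta> \<phi>) = (\<Sum>c'\<in>S. cnj (\<alpha> c') * (Yn c \<theta> \<phi> * cnj (Yn c' \<theta> \<phi>)))" .
  qed
  also have "\<dots> = (\<Sum>c'\<in>S. cnj (\<alpha> c') * sph_inner (Yn c) (Yn c'))"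
    unfolding sph_inner_def
    by (subst sph_int_sum[OF assms(1)]) (auto intro!: sph_integrable_cmult sph_integrable_Yn_cnj simp: sph_int_cmult)
  also have "\<dots> = (if c \<in> S then cnj (\<alpha> c) else 0)"
    unfolding Yn_orthonormal using assms(1) by (simp add: if_distrib cong: if_cong)
  finally show ?thesis .
qed

lemma integral_of_real_cont:
  fixes g :: "real \<Rightarrow> real"
  assumes "continuous_on UNIV g"
  shows "integral {a..b} (\<lambda>x. complex_of_real (g x)) = complex_of_real (integral {a..b} g)"
proof -
  have "g integrable_on {a..b}" by (rule integrable_continuous_interval) (rule continuous_on_subset[OF assms], simp)
  then have "((\<lambda>x. complex_of_real (g x)) has_integral complex_of_real (integral {a..b} g)) {a..b}"
    by (intro has_integral_of_real integrable_integral)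
  then show ?thesis by (rule integral_unique)
qed

lemma triple_real: "cnj (triple c a b) = triple c a b"
proof -
  define R where "R = (\<lambda>\<theta>. harm_theta (sh_deg a) (sh_ord a) \<theta> * harm_theta (sh_deg c) (sh_ord c) \<theta> * harm_theta (sh_deg b) (sh_ord b) \<theta>)"
  define k where "k = sh_ord a + sh_ord c - sh_ord b"
  have cR: "continuous_on UNIV R" unfolding R_def by (intro continuous_intros continuous_harm_theta)
  have "triple c a b = sph_int (\<lambda>\<theta> \<phi>. complex_of_real (R \<theta>) * exp (\<i> * of_int k * complex_of_real \<phi>))"
  proof (unfold triple_def, rule sph_int_cong)
    fix \<theta> \<phi>
    have c: "cnj (exp (\<i> * of_int (sh_ord b) * complex_of_real \<phi>)) = exp (- (\<i> * of_int (sh_ord b) * complex_of_real \<phi>))"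
      by (simp add: exp_cnj)
    have e: "exp (\<i> * of_int (sh_ord a) * complex_of_real \<phi>) * exp (\<i> * of_int (sh_ord c) * complex_of_real \<phi>) *
        exp (- (\<i> * of_int (sh_ord b) * complex_of_real \<phi>)) = exp (\<i> * of_int k * complex_of_real \<phi>)"
      unfolding k_def by (simp add: exp_add[symmetric] algebra_simps)
    show "Yn a \<theta> \<phi> * Yn c \<theta> \<phi> * cnj (Yn b \<theta> \<phi>) = complex_of_real (R \<theta>) * exp (\<i> * of_int k * complex_of_real \<phi>)"
      unfolding Yn_def sph_harm_theta complex_cnj_mult complex_cnj_complex_of_real c R_def e[symmetric] of_real_mult
      by (simp only: mult_ac)
  qed
  also have "\<dots> = integral {0..pi} (\<lambda>\<theta>. complex_of_real (R \<theta>) * complex_of_real (sin \<theta>)) *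
      integral {0..2*pi} (\<lambda>\<phi>. exp (\<i> * of_int k * complex_of_real \<phi>))"
    by (rule sph_int_separable) (intro continuous_intros cR)+
  also have "integral {0..pi} (\<lambda>\<theta>. complex_of_real (R \<theta>) * complex_of_real (sin \<theta>)) =
      complex_of_real (integral {0..pi} (\<lambda>\<theta>. R \<theta> * sin \<theta>))"
    unfolding of_real_mult[symmetric] by (rule integral_of_real_cont) (intro continuous_intros cR)
  also have "integral {0..2*pi} (\<lambda>\<phi>. exp (\<i> * of_int k * complex_of_real \<phi>)) = complex_of_real (if k = 0 then 2*pi else 0)"
    unfolding integral_exp_i_mult by simp
  finally show ?thesis by (simp del: of_real_mult add: of_real_mult[symmetric])
qed

lemma sin_nonneg_dom: "p \<in> sph_dom \<Longrightarrow> sin (fst p) \<ge> 0"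
  unfolding sph_dom_def by (auto intro: sin_ge_zero)

lemma sph_L2_measurable: "sph_L2 f \<Longrightarrow> (\<lambda>p. indicator sph_dom p *\<^sub>R f (fst p) (snd p)) \<in> borel_measurable lborel"
  unfolding sph_L2_def by simp

lemma continuous_borel_measurable: "continuous_on UNIV g \<Longrightarrow> g \<in> borel_measurable lborel"
  using borel_measurable_continuous_onI by (simp add: measurable_lborel1[symmetric] measurable_lborel2)

lemma sph_L2_integrable_sq:
  assumes "sph_L2 f"
  shows "integrable lborel (\<lambda>p. indicator sph_dom p * (cmod (f (fst p) (snd p)))^2 * sin (fst p))"
proof (rule integrableI_bounded)
  let ?g = "\<lambda>p. indicator sph_dom p * (cmod (f (fst p) (snd p)))^2 * sin (fst p)"
  have e: "?g p = (cmod (indicator sph_dom p *\<^sub>R f (fst p) (snd p)))^2 * sin (fst p)" for p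
    by (simp split: split_indicator)
  have s: "(\<lambda>p::real\<times>real. sin (fst p)) \<in> borel_measurable lborel"
    by (rule continuous_borel_measurable) (intro continuous_intros)
  have n: "(\<lambda>p. cmod (indicator sph_dom p *\<^sub>R f (fst p) (snd p))) \<in> borel_measurable lborel"
    using measurable_compose[OF sph_L2_measurable[OF assms] borel_measurable_norm] by simp
  show "?g \<in> borel_measurable lborel" unfolding e
    by (intro borel_measurable_times borel_measurable_power n s)
  have "(\<integral>\<^sup>+ p. ennreal (norm (?g p)) \<partial>lborel) = sph_sqnorm f"
    unfolding sph_sqnorm_def
  proof (rule nn_integral_cong)
    fix p :: "real \<times> real"
    show "ennreal (norm (?g p)) = ennreal (indicator sph_dom p * (cmod (f (fst p) (snd p)))\<^sup>2 * sin (fst p))"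
      using sin_nonneg_dom[of p] by (simp split: split_indicator)
  qed
  then show "(\<integral>\<^sup>+ p. ennreal (norm (?g p)) \<partial>lborel) < \<infinity>" using assms unfolding sph_L2_def by simp
qed

lemma integrable_indicator_sph_dom: "integrable lborel (\<lambda>p. indicator sph_dom p :: real)"
proof (rule integrable_real_indicator[OF sets_sph_dom])
  have "bounded sph_box" unfolding sph_box_def by simp
  then have "bounded sph_dom" using sph_dom_subset_box bounded_subset by blast
  then show "emeasure lborel sph_dom < \<infinity>" by (rule emeasure_bounded_finite)
qed

lemma mult_le_one_plus_sq:
  fixes a s :: real
  assumes "0 \<le> a" "0 \<le> s" "s \<le> 1"
  shows "a * s \<le> 1 + a^2 * s"
proof (cases "a \<le> 1")
  case True
  then have "a * s \<le> 1" using assms by (metis mult_le_one)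
  then show ?thesis using assms by (simp add: add_increasing2)
next
  case False
  then have "a * s \<le> a^2 * s" using assms by (intro mult_right_mono) (auto simp: power2_eq_square)
  then show ?thesis by linarith
qed

lemma sph_integrable_L2_mult:
  assumes f: "sph_L2 f" and G: "continuous_on UNIV (\<lambda>p. G (fst p) (snd p))"
  shows "sph_integrable (\<lambda>\<theta> \<phi>. f \<theta> \<phi> * G \<theta> \<phi>)"
proof -
  have "compact ((\<lambda>p. G (fst p) (snd p)) ` sph_box)"
    by (rule compact_continuous_image) (auto intro: continuous_on_subset[OF G] simp: sph_box_def)
  then have "bounded ((\<lambda>p. G (fst p) (snd p)) ` sph_box)" by (rule compact_imp_bounded)
  then obtain B where B0: "B > 0" and B1: "\<forall>x\<in>(\<lambda>p. G (fst p) (snd p)) ` sph_box. norm x \<le> B"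
    unfolding bounded_pos by blast
  have B: "B > 0" "\<And>p. p \<in> sph_box \<Longrightarrow> cmod (G (fst p) (snd p)) \<le> B" using B0 B1 by auto
  let ?h = "\<lambda>p. B * (indicator sph_dom p + indicator sph_dom p * (cmod (f (fst p) (snd p)))^2 * sin (fst p))"
  have hi: "integrable lborel ?h"
    by (intro integrable_mult_right) (rule Bochner_Integration.integrable_add[OF integrable_indicator_sph_dom sph_L2_integrable_sq[OF f]])
  let ?g = "\<lambda>p. indicator sph_dom p *\<^sub>R (f (fst p) (snd p) * G (fst p) (snd p) * complex_of_real (sin (fst p)))"
  have e: "?g p = (indicator sph_dom p *\<^sub>R f (fst p) (snd p)) * (G (fst p) (snd p) * complex_of_real (sin (fst p)))" for p
    by (simp split: split_indicator)
  have gm: "?g \<in> borel_measurable lborel" unfolding e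
    by (intro borel_measurable_times sph_L2_measurable[OF f] continuous_borel_measurable) (intro continuous_intros G)
  have bound: "norm (?g p) \<le> norm (?h p)" for p
  proof (cases "p \<in> sph_dom")
    case True
    have s: "0 \<le> sin (fst p)" "sin (fst p) \<le> 1" using sin_nonneg_dom[OF True] by simp_all
    have GB: "cmod (G (fst p) (snd p)) \<le> B" using B(2) sph_dom_subset_box True by auto
    have "norm (?g p) = cmod (G (fst p) (snd p)) * (cmod (f (fst p) (snd p)) * sin (fst p))"
      using True s by (simp add: norm_mult mult_ac)
    also have "\<dots> \<le> B * (cmod (f (fst p) (snd p)) * sin (fst p))"
      by (rule mult_right_mono[OF GB]) (simp add: s)
    also have "\<dots> \<le> norm (?h p)"
      using True s B(1) mult_le_one_plus_sq[of "cmod (f (fst p) (snd p))" "sin (fst p)"] by simp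
    finally show ?thesis .
  qed simp
  have "integrable lborel ?g"
    by (rule Bochner_Integration.integrable_bound[OF hi gm]) (use bound in auto)
  then show ?thesis unfolding sph_integrable_def set_integrable_def .
qed

lemma sph_int_Yn_mult_expansion:
  assumes f: "sph_L2 f" and S: "finite S"
    and span: "\<And>\<theta> \<phi>. cnj (Yn a \<theta> \<phi>) * Yn b \<theta> \<phi> = (\<Sum>c\<in>S. \<alpha> c * Yn c \<theta> \<phi>)"
  shows "sph_int (\<lambda>\<theta> \<phi>. Yn a \<theta> \<phi> * f \<theta> \<phi> * cnj (Yn b \<theta> \<phi>)) = (\<Sum>c\<in>S. cnj (\<alpha> c) * sh_coeff f c)"
proof -
  have ok: "sph_integrable (\<lambda>\<theta> \<phi>. f \<theta> \<phi> * cnj (Yn c \<theta> \<phi>))" for c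
    by (rule sph_integrable_L2_mult[OF f]) (intro continuous_intros continuous_Yn)
  have "sph_int (\<lambda>\<theta> \<phi>. Yn a \<theta> \<phi> * f \<theta> \<phi> * cnj (Yn b \<theta> \<phi>)) =
        sph_int (\<lambda>\<theta> \<phi>. \<Sum>c\<in>S. cnj (\<alpha> c) * (f \<theta> \<phi> * cnj (Yn c \<theta> \<phi>)))"
  proof (rule sph_int_cong)
    fix \<theta> \<phi>
    have "Yn a \<theta> \<phi> * f \<theta> \<phi> * cnj (Yn b \<theta> \<phi>) = f \<theta> \<phi> * cnj (cnj (Yn a \<theta> \<phi>) * Yn b \<theta> \<phi>)" by simp
    also have "\<dots> = (\<Sum>c\<in>S. cnj (\<alpha> c) * (f \<theta> \<phi> * cnj (Yn c \<theta> \<phi>)))"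
      unfolding span by (simp add: sum_distrib_left mult_ac)
    finally show "Yn a \<theta> \<phi> * f \<theta> \<phi> * cnj (Yn b \<theta> \<phi>) = (\<Sum>c\<in>S. cnj (\<alpha> c) * (f \<theta> \<phi> * cnj (Yn c \<theta> \<phi>)))" .
  qed
  also have "\<dots> = (\<Sum>c\<in>S. cnj (\<alpha> c) * sh_coeff f c)"
    unfolding sh_coeff_def sph_inner_def
    by (subst sph_int_sum[OF S]) (auto intro!: sph_integrable_cmult ok simp: sph_int_cmult)
  finally show ?thesis .
qed

lemma gaunt_expansion:
  "\<exists>S. finite S \<and> (\<forall>c. c \<notin> S \<longrightarrow> triple c a b = 0) \<and>
     (\<forall>f. sph_L2 f \<longrightarrow> sph_int (\<lambda>\<theta> \<phi>. Yn a \<theta> \<phi> * f \<theta> \<phi> * cnj (Yn b \<theta> \<phi>)) = (\<Sum>c\<in>S. triple c a b * sh_coeff f c))"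
proof -
  obtain S \<alpha> where S: "finite S" and span: "\<And>\<theta> \<phi>. cnj (Yn a \<theta> \<phi>) * Yn b \<theta> \<phi> = (\<Sum>c\<in>S. \<alpha> c * Yn c \<theta> \<phi>)"
    using Yn_cnj_mult_expansion by blast
  have t: "triple c a b = (if c \<in> S then cnj (\<alpha> c) else 0)" for c by (rule triple_eq_expansion_coeff[OF S span])
  show ?thesis
  proof (intro exI conjI allI impI)
    show "finite S" by fact
    show "triple c a b = 0" if "c \<notin> S" for c using t that by simp
    fix f assume "sph_L2 f"
    show "sph_int (\<lambda>\<theta> \<phi>. Yn a \<theta> \<phi> * f \<theta> \<phi> * cnj (Yn b \<theta> \<phi>)) = (\<Sum>c\<in>S. triple c a b * sh_coeff f c)"
      unfolding sph_int_Yn_mult_expansion[OF \<open>sph_L2 f\<close> S span] using t by (intro sum.cong) auto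
  qed
qed

section \<open>The SLSHT distribution of a band-limited window\<close>

definition rot_weight :: "nat \<Rightarrow> complex" where "rot_weight l = complex_of_real (sqrt (4 * pi / (2 * real l + 1)))"

definition harm_moment :: "(real \<Rightarrow> real \<Rightarrow> complex) \<Rightarrow> nat \<Rightarrow> nat \<Rightarrow> int \<Rightarrow> complex" where
  "harm_moment f n l m = sph_int (\<lambda>\<theta> \<phi>. sph_harm l m \<theta> \<phi> * f \<theta> \<phi> * cnj (Yn n \<theta> \<phi>))"

lemma rot_band_limited:
  assumes band: "\<forall>l m. l > L \<longrightarrow> sh_coeff_lm h l m = 0"
  shows "rot h \<Theta> \<psi> \<theta> \<phi> = (\<Sum>l\<le>L. \<Sum>m\<in>{- int l..int l}. rot_weight l * cnj (sph_harm l m \<Theta> \<psi>) * sh_coeff_lm h l 0 * sph_harm l m \<theta> \<phi>)"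
  unfolding rot_def rot_weight_def
  by (rule suminf_finite) (use band in auto)

lemma sph_integrable_harm_moment: "sph_L2 f \<Longrightarrow> sph_integrable (\<lambda>\<theta> \<phi>. sph_harm l m \<theta> \<phi> * f \<theta> \<phi> * cnj (Yn n \<theta> \<phi>))"
proof -
  assume f: "sph_L2 f"
  have "sph_integrable (\<lambda>\<theta> \<phi>. f \<theta> \<phi> * (sph_harm l m \<theta> \<phi> * cnj (Yn n \<theta> \<phi>)))"
    by (rule sph_integrable_L2_mult[OF f]) (intro continuous_intros continuous_Yn continuous_sph_harm)
  moreover have "(\<lambda>\<theta> \<phi>. f \<theta> \<phi> * (sph_harm l m \<theta> \<phi> * cnj (Yn n \<theta> \<phi>))) = (\<lambda>\<theta> \<phi>. sph_harm l m \<theta> \<phi> * f \<theta> \<phi> * cnj (Yn n \<theta> \<phi>))"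
    by (simp add: fun_eq_iff mult_ac)
  ultimately show ?thesis by simp
qed

lemma slsht_band_limited:
  assumes band: "\<forall>l m. l > L \<longrightarrow> sh_coeff_lm h l m = 0" and f: "sph_L2 f"
  shows "slsht h f n \<Theta> \<psi> = (\<Sum>l\<le>L. \<Sum>m\<in>{- int l..int l}. rot_weight l * cnj (sph_harm l m \<Theta> \<psi>) * sh_coeff_lm h l 0 * harm_moment f n l m)"
proof -
  let ?c = "\<lambda>l m. rot_weight l * cnj (sph_harm l m \<Theta> \<psi>) * sh_coeff_lm h l 0"
  have "slsht h f n \<Theta> \<psi> = sph_int (\<lambda>\<theta> \<phi>. \<Sum>l\<le>L. \<Sum>m\<in>{- int l..int l}. ?c l m * (sph_harm l m \<theta> \<phi> * f \<theta> \<phi> * cnj (Yn n \<theta> \<phi>)))"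
    unfolding slsht_def rot_band_limited[OF band]
    by (rule sph_int_cong) (simp add: sum_distrib_left sum_distrib_right mult_ac)
  also have "\<dots> = (\<Sum>l\<le>L. sph_int (\<lambda>\<theta> \<phi>. \<Sum>m\<in>{- int l..int l}. ?c l m * (sph_harm l m \<theta> \<phi> * f \<theta> \<phi> * cnj (Yn n \<theta> \<phi>))))"
    by (rule sph_int_sum) (auto intro!: sph_integrable_sum sph_integrable_cmult sph_integrable_harm_moment f)
  also have "\<dots> = (\<Sum>l\<le>L. \<Sum>m\<in>{- int l..int l}. ?c l m * harm_moment f n l m)"
    unfolding harm_moment_def
    by (intro sum.cong refl, subst sph_int_sum) (auto intro!: sph_integrable_cmult sph_integrable_harm_moment f simp: sph_int_cmult)
  finally show ?thesis .
qed

lemma cnj_sph_harm: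
  assumes "abs_ord m \<le> l"
  shows "cnj (sph_harm l m \<Theta> \<psi>) = (-1)^(abs_ord m) * sph_harm l (- m) \<Theta> \<psi>"
proof -
  have c: "cnj (exp (\<i> * of_int m * complex_of_real \<psi>)) = exp (\<i> * of_int (- m) * complex_of_real \<psi>)"
    by (simp add: exp_cnj)
  have sq: "(-1::complex)^n * (-1)^n = 1" for n by (simp flip: power_add mult_2)
  have "sph_harm l (- m) \<Theta> \<psi> = (-1)^(abs_ord m) * cnj (sph_harm l m \<Theta> \<psi>)"
    unfolding sph_harm_theta harm_theta_neg_order[OF assms] complex_cnj_mult c by simp
  then have "(-1)^(abs_ord m) * sph_harm l (- m) \<Theta> \<psi> = ((-1)^(abs_ord m) * (-1)^(abs_ord m)) * cnj (sph_harm l m \<Theta> \<psi>)"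
    by (simp add: mult.assoc)
  then show ?thesis unfolding sq by simp
qed

lemma abs_ord_le_of_mem: "m \<in> {- int l..int l} \<Longrightarrow> abs_ord m \<le> l"
  unfolding abs_ord_def by auto

definition slsht_coeff :: "(real \<Rightarrow> real \<Rightarrow> complex) \<Rightarrow> (real \<Rightarrow> real \<Rightarrow> complex) \<Rightarrow> nat \<Rightarrow> nat \<Rightarrow> complex" where
  "slsht_coeff h f n j = (-1) ^ nat \<bar>sh_ord j\<bar> * rot_weight (sh_deg j) * sh_coeff_lm h (sh_deg j) 0 * harm_moment f n (sh_deg j) (- sh_ord j)"

lemma bij_betw_deg_ord:
  "bij_betw (\<lambda>j. (sh_deg j, sh_ord j)) {..L^2 + 2*L} (SIGMA l:{..L}. {- int l..int l})"
proof (rule bij_betw_byWitness[where f' = "\<lambda>(l, m). sh_idx l m"])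
  show "\<forall>j\<in>{..L^2 + 2*L}. (\<lambda>(l, m). sh_idx l m) (sh_deg j, sh_ord j) = j"
    by (simp add: sh_idx_deg_ord)
  show "\<forall>lm\<in>SIGMA l:{..L}. {- int l..int l}. (sh_deg ((\<lambda>(l, m). sh_idx l m) lm), sh_ord ((\<lambda>(l, m). sh_idx l m) lm)) = lm"
    by (auto simp: sh_deg_idx[OF abs_ord_le_of_mem] sh_ord_idx[OF abs_ord_le_of_mem])
  show "(\<lambda>j. (sh_deg j, sh_ord j)) ` {..L^2 + 2*L} \<subseteq> (SIGMA l:{..L}. {- int l..int l})"
  proof
    fix x assume "x \<in> (\<lambda>j. (sh_deg j, sh_ord j)) ` {..L^2 + 2*L}"
    then obtain j where "x = (sh_deg j, sh_ord j)" "sh_deg j \<le> L" using le_band_index_iff by auto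
    with sh_ord_bound[of j] show "x \<in> (SIGMA l:{..L}. {- int l..int l})" by (auto simp: abs_ord_def)
  qed
  show "(\<lambda>(l, m). sh_idx l m) ` (SIGMA l:{..L}. {- int l..int l}) \<subseteq> {..L^2 + 2*L}"
    using le_band_index_iff by (auto simp: sh_deg_idx[OF abs_ord_le_of_mem])
qed

lemma sum_deg_ord_eq_sum_index:
  "(\<Sum>l\<le>L. \<Sum>m\<in>{- int l..int l}. G l m) = (\<Sum>j\<le>L^2 + 2*L. G (sh_deg j) (sh_ord j))"
proof -
  have "(\<Sum>l\<le>L. \<Sum>m\<in>{- int l..int l}. G l m) = (\<Sum>(l, m)\<in>(SIGMA l:{..L}. {- int l..int l}). G l m)"
    by (rule sum.Sigma) auto
  also have "\<dots> = (\<Sum>j\<le>L^2 + 2*L. G (sh_deg j) (sh_ord j))"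
    using sum.reindex_bij_betw[OF bij_betw_deg_ord, of "\<lambda>(l, m). G l m"] by simp
  finally show ?thesis .
qed

lemma slsht_Yn_expansion:
  assumes band: "\<forall>l m. l > L \<longrightarrow> sh_coeff_lm h l m = 0" and f: "sph_L2 f"
  shows "slsht h f n \<Theta> \<psi> = (\<Sum>j\<le>L^2 + 2*L. slsht_coeff h f n j * Yn j \<Theta> \<psi>)"
proof -
  let ?G = "\<lambda>l m. (-1) ^ nat \<bar>m\<bar> * rot_weight l * sh_coeff_lm h l 0 * harm_moment f n l (- m) * sph_harm l m \<Theta> \<psi>"
  have "slsht h f n \<Theta> \<psi> = (\<Sum>l\<le>L. \<Sum>m\<in>{- int l..int l}. (-1)^(nat \<bar>m\<bar>) * rot_weight l * sh_coeff_lm h l 0 * harm_moment f n l m * sph_harm l (- m) \<Theta> \<psi>)"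
    unfolding slsht_band_limited[OF band f]
    by (intro sum.cong refl) (simp add: cnj_sph_harm[OF abs_ord_le_of_mem] abs_ord_def mult_ac)
  also have "\<dots> = (\<Sum>l\<le>L. \<Sum>m\<in>{- int l..int l}. ?G l m)"
  proof (rule sum.cong[OF refl])
    fix l assume "l \<in> {..L}"
    show "(\<Sum>m\<in>{- int l..int l}. (-1)^(nat \<bar>m\<bar>) * rot_weight l * sh_coeff_lm h l 0 * harm_moment f n l m * sph_harm l (- m) \<Theta> \<psi>) =
          (\<Sum>m\<in>{- int l..int l}. ?G l m)"
      by (rule sum.reindex_bij_witness[of _ uminus uminus]) auto
  qed
  also have "\<dots> = (\<Sum>j\<le>L^2 + 2*L. ?G (sh_deg j) (sh_ord j))" by (rule sum_deg_ord_eq_sum_index)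
  also have "\<dots> = (\<Sum>j\<le>L^2 + 2*L. slsht_coeff h f n j * Yn j \<Theta> \<psi>)"
    unfolding slsht_coeff_def Yn_def ..
  finally show ?thesis .
qed

lemma slsht_coeff_add:
  assumes "sph_L2 f" "sph_L2 g"
  shows "slsht_coeff h (\<lambda>\<theta> \<phi>. f \<theta> \<phi> + g \<theta> \<phi>) n j = slsht_coeff h f n j + slsht_coeff h g n j"
proof -
  have "harm_moment (\<lambda>\<theta> \<phi>. f \<theta> \<phi> + g \<theta> \<phi>) n l m = harm_moment f n l m + harm_moment g n l m" for l m
  proof -
    have "harm_moment (\<lambda>\<theta> \<phi>. f \<theta> \<phi> + g \<theta> \<phi>) n l m = sph_int (\<lambda>\<theta> \<phi>. sph_harm l m \<theta> \<phi> * f \<theta> \<phi> * cnj (Yn n \<theta> \<phi>) + sph_harm l m \<theta> \<phi> * g \<theta> \<phi> * cnj (Yn n \<theta> \<phi>))"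
      unfolding harm_moment_def by (rule sph_int_cong) (simp add: algebra_simps)
    also have "\<dots> = harm_moment f n l m + harm_moment g n l m"
      unfolding harm_moment_def by (rule sph_int_add[OF sph_integrable_harm_moment[OF assms(1)] sph_integrable_harm_moment[OF assms(2)]])
    finally show ?thesis .
  qed
  then show ?thesis unfolding slsht_coeff_def by (simp add: algebra_simps)
qed

lemma sph_inner_Yn_sum_Yn: "finite I \<Longrightarrow> sph_inner (\<lambda>\<theta> \<phi>. \<Sum>j\<in>I. \<beta> j * Yn j \<theta> \<phi>) (Yn i) = (if i \<in> I then \<beta> i else 0)"
proof -
  assume I: "finite I"
  have "sph_inner (\<lambda>\<theta> \<phi>. \<Sum>j\<in>I. \<beta> j * Yn j \<theta> \<phi>) (Yn i) = sph_int (\<lambda>\<theta> \<phi>. \<Sum>j\<in>I. \<beta> j * (Yn j \<theta> \<phi> * cnj (Yn i \<theta> \<phi>)))"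
    unfolding sph_inner_def by (rule sph_int_cong) (simp add: sum_distrib_left sum_distrib_right mult_ac)
  also have "\<dots> = (\<Sum>j\<in>I. \<beta> j * sph_inner (Yn j) (Yn i))"
    unfolding sph_inner_def by (subst sph_int_sum[OF I]) (auto intro!: sph_integrable_cmult sph_integrable_Yn_cnj simp: sph_int_cmult)
  also have "\<dots> = (if i \<in> I then \<beta> i else 0)"
    unfolding Yn_orthonormal using I by (simp add: if_distrib cong: if_cong)
  finally show ?thesis .
qed

lemma sph_inner_Yn_sum_self: "finite I \<Longrightarrow> sph_inner (\<lambda>\<theta> \<phi>. \<Sum>j\<in>I. \<beta> j * Yn j \<theta> \<phi>) (\<lambda>\<theta> \<phi>. \<Sum>j\<in>I. \<beta> j * Yn j \<theta> \<phi>) = (\<Sum>j\<in>I. \<beta> j * cnj (\<beta> j))"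
proof -
  assume I: "finite I"
  have ok: "sph_integrable (\<lambda>\<theta> \<phi>. Yn k \<theta> \<phi> * (\<Sum>x\<in>I. cnj (\<beta> x) * cnj (Yn x \<theta> \<phi>)))" for k
    by (rule continuous_sph_integrable) (intro continuous_intros continuous_Yn)
  have "sph_inner (\<lambda>\<theta> \<phi>. \<Sum>j\<in>I. \<beta> j * Yn j \<theta> \<phi>) (\<lambda>\<theta> \<phi>. \<Sum>j\<in>I. \<beta> j * Yn j \<theta> \<phi>) =
      sph_int (\<lambda>\<theta> \<phi>. \<Sum>k\<in>I. \<beta> k * (Yn k \<theta> \<phi> * cnj (\<Sum>j\<in>I. \<beta> j * Yn j \<theta> \<phi>)))"
    unfolding sph_inner_def by (rule sph_int_cong) (simp add: sum_distrib_right mult_ac)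
  also have "\<dots> = (\<Sum>k\<in>I. \<beta> k * cnj (sph_inner (\<lambda>\<theta> \<phi>. \<Sum>j\<in>I. \<beta> j * Yn j \<theta> \<phi>) (Yn k)))"
  proof -
    have "sph_int (\<lambda>\<theta> \<phi>. Yn k \<theta> \<phi> * cnj (\<Sum>j\<in>I. \<beta> j * Yn j \<theta> \<phi>)) = cnj (sph_inner (\<lambda>\<theta> \<phi>. \<Sum>j\<in>I. \<beta> j * Yn j \<theta> \<phi>) (Yn k))" for k
    proof -
      let ?F = "\<lambda>x. indicator sph_dom x *\<^sub>R ((\<Sum>j\<in>I. \<beta> j * Yn j (fst x) (snd x)) * cnj (Yn k (fst x) (snd x)) * complex_of_real (sin (fst x)))"
      have "cnj (lebesgue_integral lborel ?F) = lebesgue_integral lborel (\<lambda>x. cnj (?F x))" using Bochner_Integration.integral_cnj[of lborel ?F] by (simp only:)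
      also have "(\<lambda>x. cnj (?F x)) = (\<lambda>x. indicator sph_dom x *\<^sub>R (Yn k (fst x) (snd x) * cnj (\<Sum>j\<in>I. \<beta> j * Yn j (fst x) (snd x)) * complex_of_real (sin (fst x))))"
        by (simp add: fun_eq_iff mult_ac)
      finally show ?thesis unfolding sph_inner_def sph_int_def set_lebesgue_integral_def by simp
    qed
    then show ?thesis unfolding sph_inner_def
      by (subst sph_int_sum[OF I]) (auto intro!: sph_integrable_cmult ok simp: sph_int_cmult)
  qed
  also have "\<dots> = (\<Sum>j\<in>I. \<beta> j * cnj (\<beta> j))"
    unfolding sph_inner_Yn_sum_Yn[OF I] using I by (intro sum.cong) auto
  finally show ?thesis .
qed

lemma sph_sqnorm_continuous:
  assumes G: "continuous_on UNIV (\<lambda>p. G (fst p) (snd p))"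
  shows "sph_sqnorm G = ennreal (Re (sph_inner G G))"
proof -
  let ?g = "\<lambda>p. (cmod (G (fst p) (snd p)))^2 * sin (fst p)"
  have c: "continuous_on sph_box ?g" by (intro continuous_intros continuous_on_subset[OF G]) auto
  have "set_integrable lborel sph_box ?g"
    unfolding set_integrable_def by (rule borel_integrable_compact[OF _ c]) (simp add: sph_box_def)
  then have si: "set_integrable lborel sph_dom ?g" by (rule set_integrable_subset[OF _ sets_sph_dom sph_dom_subset_box])
  then have int: "integrable lborel (\<lambda>p. indicator sph_dom p * ?g p)" unfolding set_integrable_def by simp
  have "sph_sqnorm G = (\<integral>\<^sup>+ p. ennreal (indicator sph_dom p * ?g p) \<partial>lborel)"
    unfolding sph_sqnorm_def by (simp add: mult.assoc)
  also have "\<dots> = ennreal (integral\<^sup>L lborel (\<lambda>p. indicator sph_dom p * ?g p))"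
    by (rule nn_integral_eq_integral[OF int]) (auto intro!: AE_I2 mult_nonneg_nonneg sin_nonneg_dom split: split_indicator)
  also have "integral\<^sup>L lborel (\<lambda>p. indicator sph_dom p * ?g p) = Re (sph_inner G G)"
  proof -
    have "sph_inner G G = (LINT p:sph_dom|lborel. complex_of_real (?g p))"
      unfolding sph_inner_def sph_int_def
    proof (intro arg_cong[where f = "set_lebesgue_integral _ _"] ext)
      fix p :: "real \<times> real"
      show "G (fst p) (snd p) * cnj (G (fst p) (snd p)) * complex_of_real (sin (fst p)) = complex_of_real ((cmod (G (fst p) (snd p)))\<^sup>2 * sin (fst p))"
        by (subst of_real_mult) (simp only: complex_norm_square)
    qed
    also have "\<dots> = complex_of_real (LINT p:sph_dom|lborel. ?g p)" by (rule set_integral_complex_of_real)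
    finally show ?thesis unfolding set_lebesgue_integral_def by simp
  qed
  finally show ?thesis .
qed

lemma sph_sqnorm_Yn_sum:
  assumes I: "finite I"
  shows "sph_sqnorm (\<lambda>\<theta> \<phi>. \<Sum>j\<in>I. \<beta> j * Yn j \<theta> \<phi>) = ennreal (\<Sum>j\<in>I. (cmod (\<beta> j))^2)"
proof -
  have "sph_sqnorm (\<lambda>\<theta> \<phi>. \<Sum>j\<in>I. \<beta> j * Yn j \<theta> \<phi>) = ennreal (Re (\<Sum>j\<in>I. \<beta> j * cnj (\<beta> j)))"
    unfolding sph_inner_Yn_sum_self[OF I, symmetric]
    by (rule sph_sqnorm_continuous) (intro continuous_intros continuous_Yn)
  also have "Re (\<Sum>j\<in>I. \<beta> j * cnj (\<beta> j)) = (\<Sum>j\<in>I. (cmod (\<beta> j))^2)"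
    by (simp add: flip: complex_norm_square of_real_sum)
  finally show ?thesis .
qed

lemma sph_conv_Yn_sums:
  "sph_conv (\<lambda>\<Theta> \<psi>. \<Sum>j\<le>N. A j * Yn j \<Theta> \<psi>) (\<lambda>\<Theta> \<psi>. \<Sum>j\<le>N. Z j * Yn j \<Theta> \<psi>) \<Theta> \<psi> = (\<Sum>j\<le>N. A j * Z j * Yn j \<Theta> \<psi>)"
  unfolding sph_conv_def sh_coeff_def sph_inner_Yn_sum_Yn[OF finite_atMost]
  by (subst suminf_finite[of "{..N}"]) (auto intro!: sum.cong)

lemma borel_measurable_cnj': "f \<in> borel_measurable M \<Longrightarrow> (\<lambda>x. cnj (f x :: complex)) \<in> borel_measurable M"
proof -
  assume f: "f \<in> borel_measurable M"
  have "(cnj :: complex \<Rightarrow> complex) \<in> borel_measurable borel"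
    by (rule borel_measurable_continuous_onI) (intro continuous_intros)
  from measurable_compose[OF f this] show ?thesis by (simp add: comp_def)
qed

definition L2_rv :: "'w measure \<Rightarrow> ('w \<Rightarrow> complex) \<Rightarrow> bool" where
  "L2_rv M g \<longleftrightarrow> g \<in> borel_measurable M \<and> integrable M (\<lambda>\<omega>. (cmod (g \<omega>))^2)"

lemma integrable_normal_sq: "\<sigma> > 0 \<Longrightarrow> integrable lborel (\<lambda>x. normal_density \<mu> \<sigma> x * x^2)"
proof -
  assume s: "\<sigma> > 0"
  have e: "(\<lambda>x. normal_density \<mu> \<sigma> x * x^2) = (\<lambda>x. normal_density \<mu> \<sigma> x * (x - \<mu>)^2 + (2 * \<mu> * (normal_density \<mu> \<sigma> x * (x - \<mu>)^1) + \<mu>^2 * normal_density \<mu> \<sigma> x))"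
    by (simp add: fun_eq_iff power2_eq_square algebra_simps)
  show ?thesis unfolding e
    by (intro Bochner_Integration.integrable_add integrable_mult_right integrable_normal_moment[OF s] integrable_normal_density) (use s in auto)
qed

lemma xy_le: "0 \<le> x \<Longrightarrow> 0 \<le> y \<Longrightarrow> x * y \<le> x^2 + (y::real)^2"
  using sum_squares_bound[of x y] mult_nonneg_nonneg[of x y] by linarith

lemma sum_sq_le: "(x + y)^2 \<le> 2 * x^2 + 2 * (y::real)^2"
  using sum_squares_bound[of x y] by (simp add: power2_sum)

context prob_space
begin

lemma integrable_sq_normal_rv:
  assumes s: "\<sigma> > 0" and D: "distributed M lborel Y (normal_density \<mu> \<sigma>)"
  shows "integrable M (\<lambda>\<omega>. (Y \<omega>)^2)"
  using distributed_integrable[OF D, of "\<lambda>x. x^2"] integrable_normal_sq[OF s, of \<mu>]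
  by (simp add: normal_density_nonneg)

lemma integrable_sq_gaussian_rv:
  assumes Ym: "Y \<in> borel_measurable M"
    and G: "(\<exists>\<mu>. AE \<omega> in M. Y \<omega> = \<mu>) \<or> (\<exists>\<mu> \<sigma>. \<sigma> > 0 \<and> distributed M lborel Y (normal_density \<mu> \<sigma>))"
  shows "integrable M (\<lambda>\<omega>. (Y \<omega>)^2)"
  using G
proof
  assume "\<exists>\<mu>. AE \<omega> in M. Y \<omega> = \<mu>"
  then obtain \<mu> where \<mu>: "AE \<omega> in M. Y \<omega> = \<mu>" by blast
  show ?thesis
  proof (rule integrable_const_bound[where B = "\<mu>^2"])
    show "AE \<omega> in M. norm ((Y \<omega>)^2) \<le> \<mu>^2" using \<mu> by eventually_elim simp
  qed (use Ym in measurable)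
next
  assume "\<exists>\<mu> \<sigma>. \<sigma> > 0 \<and> distributed M lborel Y (normal_density \<mu> \<sigma>)"
  then show ?thesis using integrable_sq_normal_rv by blast
qed

lemma gaussian_coeffs_L2_rv:
  assumes G: "gaussian_coeffs M X"
  shows "L2_rv M (\<lambda>\<omega>. X \<omega> c)"
proof -
  have m: "(\<lambda>\<omega>. X \<omega> c) \<in> borel_measurable M" using G unfolding gaussian_coeffs_def by blast
  have g: "\<And>(a::nat \<Rightarrow> real) b. (let Y = (\<lambda>\<omega>. \<Sum>c'\<in>{c}. a c' * Re (X \<omega> c') + b c' * Im (X \<omega> c')) in
           (\<exists>\<mu>. AE \<omega> in M. Y \<omega> = \<mu>) \<or> (\<exists>\<mu> \<sigma>. \<sigma> > 0 \<and> distributed M lborel Y (normal_density \<mu> \<sigma>)))"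
    using G unfolding gaussian_coeffs_def by blast
  have re: "integrable M (\<lambda>\<omega>. (Re (X \<omega> c))^2)"
    by (rule integrable_sq_gaussian_rv) (use m in measurable, use g[of "\<lambda>_. 1" "\<lambda>_. 0"] in simp)
  have im: "integrable M (\<lambda>\<omega>. (Im (X \<omega> c))^2)"
    by (rule integrable_sq_gaussian_rv) (use m in measurable, use g[of "\<lambda>_. 0" "\<lambda>_. 1"] in simp)
  have "integrable M (\<lambda>\<omega>. (Re (X \<omega> c))^2 + (Im (X \<omega> c))^2)" using re im by simp
  then have "integrable M (\<lambda>\<omega>. (cmod (X \<omega> c))^2)" by (simp add: cmod_power2)
  then show ?thesis unfolding L2_rv_def using m by simp
qed

lemma L2_rv_add:
  assumes "L2_rv M g" "L2_rv M k" shows "L2_rv M (\<lambda>\<omega>. g \<omega> + k \<omega>)"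
proof -
  have mg: "g \<in> borel_measurable M" and mk: "k \<in> borel_measurable M" using assms unfolding L2_rv_def by simp_all
  have m: "(\<lambda>\<omega>. g \<omega> + k \<omega>) \<in> borel_measurable M" using mg mk by measurable
  have i: "integrable M (\<lambda>\<omega>. 2 * (cmod (g \<omega>))^2 + 2 * (cmod (k \<omega>))^2)" using assms unfolding L2_rv_def by simp
  have "integrable M (\<lambda>\<omega>. (cmod (g \<omega> + k \<omega>))^2)"
  proof (rule Bochner_Integration.integrable_bound[OF i])
    show "(\<lambda>\<omega>. (cmod (g \<omega> + k \<omega>))^2) \<in> borel_measurable M" using m by measurable
    show "AE \<omega> in M. norm ((cmod (g \<omega> + k \<omega>))^2) \<le> norm (2 * (cmod (g \<omega>))^2 + 2 * (cmod (k \<omega>))^2)"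
    proof (intro AE_I2)
      fix \<omega>
      have t: "cmod (g \<omega> + k \<omega>) \<le> cmod (g \<omega>) + cmod (k \<omega>)" by (rule norm_triangle_ineq)
      have "(cmod (g \<omega> + k \<omega>))^2 \<le> (cmod (g \<omega>) + cmod (k \<omega>))^2"
        using t by (intro power_mono) auto
      also have "\<dots> \<le> 2 * (cmod (g \<omega>))^2 + 2 * (cmod (k \<omega>))^2"
        by (rule sum_sq_le)
      finally show "norm ((cmod (g \<omega> + k \<omega>))^2) \<le> norm (2 * (cmod (g \<omega>))^2 + 2 * (cmod (k \<omega>))^2)" by simp
    qed
  qed
  then show ?thesis unfolding L2_rv_def using m by simp
qed

lemma L2_rv_cmult: "L2_rv M g \<Longrightarrow> L2_rv M (\<lambda>\<omega>. a * g \<omega>)"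
  unfolding L2_rv_def by (auto simp: norm_mult power_mult_distrib)

lemma L2_rv_zero: "L2_rv M (\<lambda>\<omega>. 0)" unfolding L2_rv_def by simp

lemma L2_rv_sum: "(\<And>i. i \<in> I \<Longrightarrow> L2_rv M (g i)) \<Longrightarrow> L2_rv M (\<lambda>\<omega>. \<Sum>i\<in>I. g i \<omega>)"
proof (induction I rule: infinite_finite_induct)
  case (infinite A) then show ?case by (simp add: L2_rv_zero)
next
  case empty then show ?case by (simp add: L2_rv_zero)
next
  case (insert x F) then show ?case by (simp add: L2_rv_add)
qed

lemma L2_rv_prod:
  assumes "L2_rv M g" "L2_rv M k" shows "integrable M (\<lambda>\<omega>. g \<omega> * cnj (k \<omega>))"
proof -
  have i: "integrable M (\<lambda>\<omega>. (cmod (g \<omega>))^2 + (cmod (k \<omega>))^2)" using assms unfolding L2_rv_def by simp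
  show ?thesis
  proof (rule Bochner_Integration.integrable_bound[OF i])
    have mg: "g \<in> borel_measurable M" and mk: "k \<in> borel_measurable M" using assms unfolding L2_rv_def by simp_all
    show "(\<lambda>\<omega>. g \<omega> * cnj (k \<omega>)) \<in> borel_measurable M" using mg borel_measurable_cnj'[OF mk] by measurable
    show "AE \<omega> in M. norm (g \<omega> * cnj (k \<omega>)) \<le> norm ((cmod (g \<omega>))^2 + (cmod (k \<omega>))^2)"
    proof (intro AE_I2)
      fix \<omega>
      have "norm (g \<omega> * cnj (k \<omega>)) = cmod (g \<omega>) * cmod (k \<omega>)" by (simp add: norm_mult)
      also have "\<dots> \<le> (cmod (g \<omega>))^2 + (cmod (k \<omega>))^2"
        by (rule xy_le) simp_all
      finally show "norm (g \<omega> * cnj (k \<omega>)) \<le> norm ((cmod (g \<omega>))^2 + (cmod (k \<omega>))^2)" by simp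
    qed
  qed
qed

lemma integral_sum_mult_cnj_sum:
  assumes S: "finite S" and T: "finite T" and X: "\<And>c. c \<in> S \<Longrightarrow> L2_rv M (X c)" and Y: "\<And>d. d \<in> T \<Longrightarrow> L2_rv M (Y d)"
  shows "(LINT \<omega>|M. (\<Sum>c\<in>S. a c * X c \<omega>) * cnj (\<Sum>d\<in>T. b d * Y d \<omega>)) =
         (\<Sum>c\<in>S. \<Sum>d\<in>T. a c * cnj (b d) * (LINT \<omega>|M. X c \<omega> * cnj (Y d \<omega>)))"
proof -
  have "(LINT \<omega>|M. (\<Sum>c\<in>S. a c * X c \<omega>) * cnj (\<Sum>d\<in>T. b d * Y d \<omega>)) =
        (LINT \<omega>|M. (\<Sum>c\<in>S. \<Sum>d\<in>T. a c * cnj (b d) * (X c \<omega> * cnj (Y d \<omega>))))"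
    by (intro Bochner_Integration.integral_cong refl) (simp add: sum_distrib_left sum_distrib_right mult_ac, rule sum.swap)
  also have "\<dots> = (\<Sum>c\<in>S. (LINT \<omega>|M. (\<Sum>d\<in>T. a c * cnj (b d) * (X c \<omega> * cnj (Y d \<omega>)))))"
    by (rule Bochner_Integration.integral_sum) (auto intro!: Bochner_Integration.integrable_sum integrable_mult_right L2_rv_prod X Y)
  also have "\<dots> = (\<Sum>c\<in>S. \<Sum>d\<in>T. a c * cnj (b d) * (LINT \<omega>|M. X c \<omega> * cnj (Y d \<omega>)))"
    by (intro sum.cong refl, subst Bochner_Integration.integral_sum) (auto intro!: integrable_mult_right L2_rv_prod X Y)
  finally show ?thesis .
qed

lemma integral_mult_cnj_self: "(LINT \<omega>|M. X \<omega> * cnj (X \<omega>)) = complex_of_real (LINT \<omega>|M. (cmod (X \<omega>))^2)"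
proof -
  have "(\<lambda>\<omega>. X \<omega> * cnj (X \<omega>)) = (\<lambda>\<omega>. complex_of_real ((cmod (X \<omega>))^2))" by (simp only: complex_norm_square)
  then show ?thesis by (simp only: integral_complex_of_real)
qed

end

lemma sph_L2_add:
  assumes f: "sph_L2 f" and g: "sph_L2 g"
  shows "sph_L2 (\<lambda>\<theta> \<phi>. f \<theta> \<phi> + g \<theta> \<phi>)"
proof -
  have m: "(\<lambda>p. indicator sph_dom p *\<^sub>R (f (fst p) (snd p) + g (fst p) (snd p))) \<in> borel_measurable lborel"
    using borel_measurable_add[OF sph_L2_measurable[OF f] sph_L2_measurable[OF g]] by (simp add: scaleR_right_distrib)
  let ?F = "\<lambda>p. indicator sph_dom p * (cmod (f (fst p) (snd p)))^2 * sin (fst p)"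
  let ?G = "\<lambda>p. indicator sph_dom p * (cmod (g (fst p) (snd p)))^2 * sin (fst p)"
  have iH: "integrable lborel (\<lambda>p. 2 * ?F p + 2 * ?G p)"
    using sph_L2_integrable_sq[OF f] sph_L2_integrable_sq[OF g] by simp
  have "sph_sqnorm (\<lambda>\<theta> \<phi>. f \<theta> \<phi> + g \<theta> \<phi>) \<le> (\<integral>\<^sup>+ p. ennreal (2 * ?F p + 2 * ?G p) \<partial>lborel)"
    unfolding sph_sqnorm_def
  proof (intro nn_integral_mono ennreal_leI)
    fix p :: "real \<times> real"
    show "indicator sph_dom p * (cmod (f (fst p) (snd p) + g (fst p) (snd p)))^2 * sin (fst p) \<le> 2 * ?F p + 2 * ?G p"
    proof (cases "p \<in> sph_dom")
      case False then show ?thesis by simp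
    next
      case True
      have s: "0 \<le> sin (fst p)" using sin_nonneg_dom[OF True] .
      have "(cmod (f (fst p) (snd p) + g (fst p) (snd p)))^2 \<le> (cmod (f (fst p) (snd p)) + cmod (g (fst p) (snd p)))^2"
        by (intro power_mono norm_triangle_ineq) simp
      also have "\<dots> \<le> 2 * (cmod (f (fst p) (snd p)))^2 + 2 * (cmod (g (fst p) (snd p)))^2" by (rule sum_sq_le)
      finally have "(cmod (f (fst p) (snd p) + g (fst p) (snd p)))^2 * sin (fst p) \<le>
          (2 * (cmod (f (fst p) (snd p)))^2 + 2 * (cmod (g (fst p) (snd p)))^2) * sin (fst p)"
        using s by (rule mult_right_mono)
      then show ?thesis using True by (simp add: algebra_simps)
    qed
  qed
  also have "\<dots> = ennreal (LINT p|lborel. 2 * ?F p + 2 * ?G p)"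
    by (rule nn_integral_eq_integral[OF iH]) (auto intro!: AE_I2 mult_nonneg_nonneg add_nonneg_nonneg sin_nonneg_dom split: split_indicator)
  also have "\<dots> < \<infinity>" by simp
  finally show ?thesis unfolding sph_L2_def using m by simp
qed

lemma sh_coeff_lm_real:
  assumes h_real: "\<forall>\<theta> \<phi>. (\<theta>, \<phi>) \<in> sph_dom \<longrightarrow> h \<theta> \<phi> \<in> \<real>"
  shows "cnj (sh_coeff_lm h l 0) = sh_coeff_lm h l 0"
proof -
  have "sh_coeff_lm h l 0 = (LINT p:sph_dom|lborel. complex_of_real (Re (h (fst p) (snd p)) * harm_theta l 0 (fst p) * sin (fst p)))"
    unfolding sh_coeff_lm_def sph_inner_def sph_int_def
  proof (rule set_lebesgue_integral_cong[OF sets_sph_dom], intro allI impI)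
    fix p :: "real \<times> real" assume p: "p \<in> sph_dom"
    have "h (fst p) (snd p) \<in> \<real>" using h_real p by (cases p) auto
    then have hr: "h (fst p) (snd p) = complex_of_real (Re (h (fst p) (snd p)))" by (simp add: complex_is_Real_iff)
    show "h (fst p) (snd p) * cnj (sph_harm l 0 (fst p) (snd p)) * complex_of_real (sin (fst p)) =
        complex_of_real (Re (h (fst p) (snd p)) * harm_theta l 0 (fst p) * sin (fst p))"
      by (subst hr) (simp add: sph_harm_theta)
  qed
  also have "\<dots> = complex_of_real (LINT p:sph_dom|lborel. Re (h (fst p) (snd p)) * harm_theta l 0 (fst p) * sin (fst p))"
    by (rule set_integral_complex_of_real)
  finally show ?thesis by simp
qed

definition gaunt_support :: "nat \<Rightarrow> nat \<Rightarrow> nat set" where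
  "gaunt_support a b = (SOME S. finite S \<and> (\<forall>c. c \<notin> S \<longrightarrow> triple c a b = 0) \<and>
     (\<forall>f. sph_L2 f \<longrightarrow> sph_int (\<lambda>\<theta> \<phi>. Yn a \<theta> \<phi> * f \<theta> \<phi> * cnj (Yn b \<theta> \<phi>)) = (\<Sum>c\<in>S. triple c a b * sh_coeff f c)))"

lemma gaunt_support: "finite (gaunt_support a b)" "c \<notin> gaunt_support a b \<Longrightarrow> triple c a b = 0"
  "sph_L2 f \<Longrightarrow> sph_int (\<lambda>\<theta> \<phi>. Yn a \<theta> \<phi> * f \<theta> \<phi> * cnj (Yn b \<theta> \<phi>)) = (\<Sum>c\<in>gaunt_support a b. triple c a b * sh_coeff f c)"
  using someI_ex[OF gaunt_expansion[of a b]] unfolding gaunt_support_def[symmetric] by blast+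

definition slsht_kernel :: "(real \<Rightarrow> real \<Rightarrow> complex) \<Rightarrow> nat \<Rightarrow> nat \<Rightarrow> nat \<Rightarrow> complex" where
  "slsht_kernel h c r n = (-1) ^ nat \<bar>sh_ord r\<bar> * complex_of_real (sqrt (4 * pi / (2 * real (sh_deg r) + 1)))
                       * sh_coeff_lm h (sh_deg r) 0 * triple c (sh_idx (sh_deg r) (- sh_ord r)) n"

definition kernel_support :: "nat \<Rightarrow> nat \<Rightarrow> nat set" where "kernel_support r n = gaunt_support (sh_idx (sh_deg r) (- sh_ord r)) n"

lemma finite_kernel_support: "finite (kernel_support r n)" unfolding kernel_support_def by (rule gaunt_support(1))

lemma slsht_kernel_outside_support: "c \<notin> kernel_support r n \<Longrightarrow> slsht_kernel h c r n = 0"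
  unfolding slsht_kernel_def kernel_support_def using gaunt_support(2) by simp

definition slsht_kernel_comb :: "(real \<Rightarrow> real \<Rightarrow> complex) \<Rightarrow> (nat \<Rightarrow> complex) \<Rightarrow> nat \<Rightarrow> nat \<Rightarrow> complex" where
  "slsht_kernel_comb h x n r = (\<Sum>c\<in>kernel_support r n. slsht_kernel h c r n * x c)"

lemma slsht_coeff_kernel:
  assumes f: "sph_L2 f"
  shows "slsht_coeff h f n r = slsht_kernel_comb h (sh_coeff f) n r"
proof -
  have ord_le: "abs_ord (- sh_ord r) \<le> sh_deg r" using sh_ord_bound[of r] by (simp add: abs_ord_def)
  have "harm_moment f n (sh_deg r) (- sh_ord r) = (\<Sum>c\<in>kernel_support r n. triple c (sh_idx (sh_deg r) (- sh_ord r)) n * sh_coeff f c)"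
    unfolding harm_moment_def kernel_support_def Yn_sh_idx[OF ord_le, symmetric] by (rule gaunt_support(3)[OF f])
  then show ?thesis unfolding slsht_coeff_def slsht_kernel_comb_def slsht_kernel_def rot_weight_def
    by (simp add: sum_distrib_left sum_distrib_right mult_ac)
qed

lemma slsht_kernel_real:
  assumes h_real: "\<forall>\<theta> \<phi>. (\<theta>, \<phi>) \<in> sph_dom \<longrightarrow> h \<theta> \<phi> \<in> \<real>"
  shows "cnj (slsht_kernel h c r n) = slsht_kernel h c r n"
  unfolding slsht_kernel_def using sh_coeff_lm_real[OF h_real] triple_real by simp

lemma sph_sqnorm_filtered_slsht_error:
  assumes band: "\<forall>l m. l > L \<longrightarrow> sh_coeff_lm h l m = 0" and s: "sph_L2 s" and z: "sph_L2 z"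
  shows "sph_sqnorm (\<lambda>\<Theta> \<psi>. sph_conv (slsht h (\<lambda>\<theta> \<phi>. s \<theta> \<phi> + z \<theta> \<phi>) n) (\<lambda>\<Theta> \<psi>. \<Sum>r\<le>L\<^sup>2 + 2 * L. \<zeta> r * Yn r \<Theta> \<psi>) \<Theta> \<psi>
                             - slsht h s n \<Theta> \<psi>)
       = ennreal (\<Sum>r\<le>L\<^sup>2 + 2 * L. (cmod (\<zeta> r * (slsht_coeff h s n r + slsht_coeff h z n r) - slsht_coeff h s n r))\<^sup>2)"
proof -
  let ?N = "L\<^sup>2 + 2 * L"
  let ?a = "slsht_coeff h s n" and ?b = "slsht_coeff h z n"
  have f: "slsht h (\<lambda>\<theta> \<phi>. s \<theta> \<phi> + z \<theta> \<phi>) n = (\<lambda>\<Theta> \<psi>. \<Sum>r\<le>?N. (?a r + ?b r) * Yn r \<Theta> \<psi>)"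
    using slsht_Yn_expansion[OF band sph_L2_add[OF s z]] by (simp add: fun_eq_iff slsht_coeff_add[OF s z])
  have "(\<lambda>\<Theta> \<psi>. sph_conv (slsht h (\<lambda>\<theta> \<phi>. s \<theta> \<phi> + z \<theta> \<phi>) n) (\<lambda>\<Theta> \<psi>. \<Sum>r\<le>?N. \<zeta> r * Yn r \<Theta> \<psi>) \<Theta> \<psi> - slsht h s n \<Theta> \<psi>)
      = (\<lambda>\<Theta> \<psi>. (\<Sum>r\<le>?N. (?a r + ?b r) * \<zeta> r * Yn r \<Theta> \<psi>) - (\<Sum>r\<le>?N. ?a r * Yn r \<Theta> \<psi>))"
    unfolding f sph_conv_Yn_sums slsht_Yn_expansion[OF band s] ..
  also have "\<dots> = (\<lambda>\<Theta> \<psi>. \<Sum>r\<le>?N. (\<zeta> r * (?a r + ?b r) - ?a r) * Yn r \<Theta> \<psi>)"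
    by (simp add: fun_eq_iff sum_subtractf[symmetric] algebra_simps)
  finally show ?thesis by (simp add: sph_sqnorm_Yn_sum)
qed

section \<open>Wiener gains\<close>

text \<open>The mean squared error of the estimate w (X + W) of X, for uncorrelated X and W
  with E|X|^2 = a and E|W|^2 = b.\<close>
definition wiener_risk :: "real \<Rightarrow> real \<Rightarrow> complex \<Rightarrow> real" where
  "wiener_risk a b w = a * (cmod (1 - w))\<^sup>2 + b * (cmod w)\<^sup>2"

definition wiener_gain :: "real \<Rightarrow> real \<Rightarrow> complex" where
  "wiener_gain a b = (if a + b > 0 then complex_of_real (a / (a + b)) else 0)"

lemma wiener_risk_nonneg: "0 \<le> a \<Longrightarrow> 0 \<le> b \<Longrightarrow> 0 \<le> wiener_risk a b w"
  unfolding wiener_risk_def by simp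

lemma wiener_risk_expand: "wiener_risk a b w = (cmod w)\<^sup>2 * (a + b) - 2 * Re w * a + a"
  unfolding wiener_risk_def cmod_power2 by (simp add: power2_eq_square algebra_simps)

lemma wiener_risk_excess:
  assumes "a + b > 0"
  shows "wiener_risk a b w = wiener_risk a b (wiener_gain a b) + (a + b) * (cmod (w - wiener_gain a b))\<^sup>2"
proof -
  have identity: "(cmod w)\<^sup>2 * c - 2 * Re w * (c * g) + c * g =
      ((cmod (complex_of_real g))\<^sup>2 * c - 2 * Re (complex_of_real g) * (c * g) + c * g) + c * (cmod (w - complex_of_real g))\<^sup>2"
    for c g :: real
    unfolding cmod_power2 by (simp add: power2_eq_square algebra_simps)
  have gain: "wiener_gain a b = complex_of_real (a / (a + b))" using assms by (simp add: wiener_gain_def)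
  have "(a + b) * (a / (a + b)) = a" using assms by simp
  with identity[of "a + b" "a / (a + b)"] show ?thesis
    unfolding gain wiener_risk_expand by (simp only:)
qed

lemma wiener_gain_minimizes:
  assumes "0 \<le> a" "0 \<le> b"
  shows "wiener_risk a b (wiener_gain a b) \<le> wiener_risk a b w"
proof (cases "a + b > 0")
  case True
  then show ?thesis by (subst (2) wiener_risk_excess) simp_all
next
  case False
  then have "a = 0" "b = 0" using assms by linarith+
  then show ?thesis by (simp add: wiener_risk_def)
qed

lemma wiener_gain_unique:
  assumes "a + b > 0" "w \<noteq> wiener_gain a b"
  shows "wiener_risk a b (wiener_gain a b) < wiener_risk a b w"
  using assms by (subst (2) wiener_risk_excess) simp_all

lemma suminf_strict_ennreal:
  fixes \<alpha> \<beta> :: "nat \<Rightarrow> real"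
  assumes a0: "\<And>n. 0 \<le> \<alpha> n" and le: "\<And>n. \<alpha> n \<le> \<beta> n" and lt: "\<alpha> n0 < \<beta> n0"
    and fin: "(\<Sum>n. ennreal (\<alpha> n)) < \<infinity>"
  shows "(\<Sum>n. ennreal (\<alpha> n)) < (\<Sum>n. ennreal (\<beta> n))"
proof (rule ccontr)
  assume "\<not> ?thesis"
  then have le2: "(\<Sum>n. ennreal (\<beta> n)) \<le> (\<Sum>n. ennreal (\<alpha> n))" by simp
  have b0: "0 \<le> \<beta> n" for n using a0[of n] le[of n] by linarith
  have sa: "summable \<alpha>" using fin by (intro summable_suminf_not_top a0) simp
  have sb: "summable \<beta>" using le2 fin by (intro summable_suminf_not_top b0) simp
  have "ennreal (suminf \<beta>) \<le> ennreal (suminf \<alpha>)"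
    using le2 unfolding suminf_ennreal2[OF a0 sa] suminf_ennreal2[OF b0 sb] .
  then have "suminf \<beta> \<le> suminf \<alpha>" using suminf_nonneg[OF sa a0] by (simp add: ennreal_le_iff)
  moreover have "0 < suminf (\<lambda>n. \<beta> n - \<alpha> n)"
    by (rule suminf_pos2[where i = n0]) (use sa sb le lt in \<open>auto intro: summable_diff\<close>)
  then have "suminf \<alpha> < suminf \<beta>" using suminf_diff[OF sb sa] by simp
  ultimately show False by simp
qed

lemma suminf_sum_ennreal_mono:
  fixes q :: "nat \<Rightarrow> nat \<Rightarrow> 'a \<Rightarrow> real"
  assumes "\<And>n r. q n r (opt n r) \<le> q n r (\<zeta> n r)"
  shows "(\<Sum>n. ennreal (\<Sum>r\<le>N. q n r (opt n r))) \<le> (\<Sum>n. ennreal (\<Sum>r\<le>N. q n r (\<zeta> n r)))"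
  by (intro suminf_le ennreal_leI sum_mono assms) auto

lemma suminf_sum_ennreal_strict_mono:
  fixes q :: "nat \<Rightarrow> nat \<Rightarrow> 'a \<Rightarrow> real"
  assumes nonneg: "\<And>n r. 0 \<le> q n r (opt n r)" and le: "\<And>n r. q n r (opt n r) \<le> q n r (\<zeta> n r)"
    and "r0 \<le> N" and lt: "q n0 r0 (opt n0 r0) < q n0 r0 (\<zeta> n0 r0)"
    and fin: "(\<Sum>n. ennreal (\<Sum>r\<le>N. q n r (opt n r))) < \<infinity>"
  shows "(\<Sum>n. ennreal (\<Sum>r\<le>N. q n r (opt n r))) < (\<Sum>n. ennreal (\<Sum>r\<le>N. q n r (\<zeta> n r)))"
proof (rule suminf_strict_ennreal[OF _ _ _ fin])
  show "(\<Sum>r\<le>N. q n0 r (opt n0 r)) < (\<Sum>r\<le>N. q n0 r (\<zeta> n0 r))"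
    by (rule sum_strict_mono_ex1) (use le lt \<open>r0 \<le> N\<close> in auto)
qed (auto intro: sum_nonneg sum_mono nonneg le)

lemma wiener_gain_minimizes_series:
  fixes a b :: "nat \<Rightarrow> nat \<Rightarrow> real" and N :: nat
  assumes "\<And>n r. 0 \<le> a n r" "\<And>n r. 0 \<le> b n r"
  defines "R \<equiv> \<lambda>\<zeta>. \<Sum>n. ennreal (\<Sum>r\<le>N. wiener_risk (a n r) (b n r) (\<zeta> n r))"
  shows "R (\<lambda>n r. wiener_gain (a n r) (b n r)) \<le> R \<zeta>"
    and "R (\<lambda>n r. wiener_gain (a n r) (b n r)) < \<infinity> \<Longrightarrow> R \<zeta> \<le> R (\<lambda>n r. wiener_gain (a n r) (b n r)) \<Longrightarrow>
         r \<le> N \<Longrightarrow> a n r + b n r > 0 \<Longrightarrow> \<zeta> n r = wiener_gain (a n r) (b n r)"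
proof -
  show "R (\<lambda>n r. wiener_gain (a n r) (b n r)) \<le> R \<zeta>"
    unfolding R_def by (rule suminf_sum_ennreal_mono) (simp add: wiener_gain_minimizes assms)
  assume fin: "R (\<lambda>n r. wiener_gain (a n r) (b n r)) < \<infinity>" and le: "R \<zeta> \<le> R (\<lambda>n r. wiener_gain (a n r) (b n r))"
    and "r \<le> N" "a n r + b n r > 0"
  show "\<zeta> n r = wiener_gain (a n r) (b n r)"
  proof (rule ccontr)
    assume "\<zeta> n r \<noteq> wiener_gain (a n r) (b n r)"
    with \<open>a n r + b n r > 0\<close>
    have "wiener_risk (a n r) (b n r) (wiener_gain (a n r) (b n r)) < wiener_risk (a n r) (b n r) (\<zeta> n r)"
      by (rule wiener_gain_unique)
    then have "R (\<lambda>n r. wiener_gain (a n r) (b n r)) < R \<zeta>"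
      using fin unfolding R_def
      by (intro suminf_sum_ennreal_strict_mono[OF _ _ \<open>r \<le> N\<close>])
        (simp_all add: wiener_risk_nonneg wiener_gain_minimizes assms)
    with le show False by simp
  qed
qed

lemma suminf_suminf_finite_support:
  fixes a :: "nat \<Rightarrow> complex"
  assumes S: "finite S" and z: "\<And>c. c \<notin> S \<Longrightarrow> a c = 0"
  shows "(\<Sum>c. \<Sum>c'. a c * a c' * K c c') = (\<Sum>c\<in>S. \<Sum>c'\<in>S. a c * a c' * K c c')"
proof -
  have i: "(\<Sum>c'. a c * a c' * K c c') = (\<Sum>c'\<in>S. a c * a c' * K c c')" for c
    by (rule suminf_finite[OF S]) (simp add: z)
  show ?thesis unfolding i by (rule suminf_finite[OF S]) (simp add: z)
qed

lemma suminf_suminf_finite_support_add: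
  fixes a :: "nat \<Rightarrow> complex"
  assumes "finite S" and "\<And>c. c \<notin> S \<Longrightarrow> a c = 0"
  shows "(\<Sum>c. \<Sum>c'. a c * a c' * (K c c' + K' c c')) = (\<Sum>c. \<Sum>c'. a c * a c' * K c c') + (\<Sum>c. \<Sum>c'. a c * a c' * K' c c')"
  using suminf_suminf_finite_support[OF assms, where K = "\<lambda>c c'. K c c' + K' c c'"]
    suminf_suminf_finite_support[OF assms, where K = K] suminf_suminf_finite_support[OF assms, where K = K']
  by (simp add: distrib_left sum.distrib)

definition slsht_energy :: "'w measure \<Rightarrow> (real \<Rightarrow> real \<Rightarrow> complex) \<Rightarrow> ('w \<Rightarrow> nat \<Rightarrow> complex) \<Rightarrow> nat \<Rightarrow> nat \<Rightarrow> real" where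
  "slsht_energy M h x n r = (LINT \<omega>|M. (cmod (slsht_kernel_comb h (x \<omega>) n r))\<^sup>2)"

context prob_space
begin

lemma integral_cmod_sq_real_comb:
  assumes Y: "\<And>c. L2_rv M (\<lambda>\<omega>. Y \<omega> c)" and S: "finite S"
    and real: "\<And>c. cnj (k c) = k c" and supp: "\<And>c. c \<notin> S \<Longrightarrow> k c = 0"
  shows "(\<Sum>c. \<Sum>c'. k c * k c' * (LINT \<omega>|M. Y \<omega> c * cnj (Y \<omega> c'))) =
         complex_of_real (LINT \<omega>|M. (cmod (\<Sum>c\<in>S. k c * Y \<omega> c))\<^sup>2)"
proof -
  have "(\<Sum>c. \<Sum>c'. k c * k c' * (LINT \<omega>|M. Y \<omega> c * cnj (Y \<omega> c'))) =
        (\<Sum>c\<in>S. \<Sum>c'\<in>S. k c * cnj (k c') * (LINT \<omega>|M. Y \<omega> c * cnj (Y \<omega> c')))"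
    using suminf_suminf_finite_support[OF S supp] by (simp add: real)
  also have "\<dots> = (LINT \<omega>|M. (\<Sum>c\<in>S. k c * Y \<omega> c) * cnj (\<Sum>c\<in>S. k c * Y \<omega> c))"
    by (rule integral_sum_mult_cnj_sum[OF S S Y Y, symmetric])
  finally show ?thesis by (simp only: integral_mult_cnj_self)
qed

lemma nn_integral_estimation_error:
  assumes X: "L2_rv M X" and W: "L2_rv M W" and uncorr: "(LINT \<omega>|M. X \<omega> * cnj (W \<omega>)) = 0"
  shows "(\<integral>\<^sup>+ \<omega>. ennreal ((cmod (w * (X \<omega> + W \<omega>) - X \<omega>))\<^sup>2) \<partial>M) =
         ennreal (wiener_risk (LINT \<omega>|M. (cmod (X \<omega>))\<^sup>2) (LINT \<omega>|M. (cmod (W \<omega>))\<^sup>2) w)"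
proof -
  define a where "a = (LINT \<omega>|M. (cmod (X \<omega>))\<^sup>2)"
  define b where "b = (LINT \<omega>|M. (cmod (W \<omega>))\<^sup>2)"
  define V where "V = (\<lambda>\<omega>. w * (X \<omega> + W \<omega>) - X \<omega>)"
  have V: "L2_rv M V" unfolding V_def diff_conv_add_uminus
    by (intro L2_rv_add L2_rv_cmult X W) (use L2_rv_cmult[OF X, of "-1"] in simp)
  have uncorr': "(LINT \<omega>|M. W \<omega> * cnj (X \<omega>)) = 0"
    using Bochner_Integration.integral_cnj[of M "\<lambda>\<omega>. X \<omega> * cnj (W \<omega>)"] uncorr by (simp add: mult.commute)
  let ?c = "complex_of_real ((cmod w)\<^sup>2)"
  let ?E = "\<lambda>g. (LINT \<omega>|M. g \<omega>) :: complex"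
  have pw: "V \<omega> * cnj (V \<omega>) = ?c * (X \<omega> * cnj (X \<omega>)) + ?c * (X \<omega> * cnj (W \<omega>)) + ?c * (W \<omega> * cnj (X \<omega>))
      + ?c * (W \<omega> * cnj (W \<omega>)) - w * (X \<omega> * cnj (X \<omega>)) - w * (W \<omega> * cnj (X \<omega>)) - cnj w * (X \<omega> * cnj (X \<omega>))
      - cnj w * (X \<omega> * cnj (W \<omega>)) + X \<omega> * cnj (X \<omega>)" for \<omega>
    unfolding V_def complex_norm_square by (simp add: algebra_simps)
  have "?E (\<lambda>\<omega>. V \<omega> * cnj (V \<omega>)) = ?c * ?E (\<lambda>\<omega>. X \<omega> * cnj (X \<omega>)) + ?c * ?E (\<lambda>\<omega>. X \<omega> * cnj (W \<omega>))
      + ?c * ?E (\<lambda>\<omega>. W \<omega> * cnj (X \<omega>)) + ?c * ?E (\<lambda>\<omega>. W \<omega> * cnj (W \<omega>))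
      - w * ?E (\<lambda>\<omega>. X \<omega> * cnj (X \<omega>)) - w * ?E (\<lambda>\<omega>. W \<omega> * cnj (X \<omega>)) - cnj w * ?E (\<lambda>\<omega>. X \<omega> * cnj (X \<omega>))
      - cnj w * ?E (\<lambda>\<omega>. X \<omega> * cnj (W \<omega>)) + ?E (\<lambda>\<omega>. X \<omega> * cnj (X \<omega>))"
    unfolding pw using L2_rv_prod[OF X X] L2_rv_prod[OF X W] L2_rv_prod[OF W X] L2_rv_prod[OF W W]
    by (simp only: Bochner_Integration.integral_add Bochner_Integration.integral_diff integral_mult_right_zero
        integrable_mult_right Bochner_Integration.integrable_add Bochner_Integration.integrable_diff)
  also have "\<dots> = ?c * complex_of_real a + ?c * complex_of_real b - (w + cnj w) * complex_of_real a + complex_of_real a"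
    unfolding uncorr uncorr' a_def b_def integral_mult_cnj_self by (simp add: algebra_simps)
  also have "\<dots> = complex_of_real (wiener_risk a b w)"
    unfolding wiener_risk_expand complex_add_cnj by (simp add: algebra_simps)
  finally have "(LINT \<omega>|M. (cmod (V \<omega>))\<^sup>2) = wiener_risk a b w"
    unfolding integral_mult_cnj_self of_real_eq_iff .
  moreover have "(\<integral>\<^sup>+ \<omega>. ennreal ((cmod (V \<omega>))\<^sup>2) \<partial>M) = ennreal (LINT \<omega>|M. (cmod (V \<omega>))\<^sup>2)"
    by (rule nn_integral_eq_integral) (use V in \<open>simp_all add: L2_rv_def\<close>)
  ultimately show ?thesis unfolding V_def a_def b_def by simp
qed

lemma nn_integral_suminf_estimation_error:
  assumes X: "\<And>n r. L2_rv M (X n r)" and W: "\<And>n r. L2_rv M (W n r)"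
    and uncorr: "\<And>n r. (LINT \<omega>|M. X n r \<omega> * cnj (W n r \<omega>)) = 0"
  shows "(\<integral>\<^sup>+ \<omega>. (\<Sum>n. ennreal (\<Sum>r\<le>N. (cmod (\<zeta> n r * (X n r \<omega> + W n r \<omega>) - X n r \<omega>))\<^sup>2)) \<partial>M) =
         (\<Sum>n. ennreal (\<Sum>r\<le>N. wiener_risk (LINT \<omega>|M. (cmod (X n r \<omega>))\<^sup>2) (LINT \<omega>|M. (cmod (W n r \<omega>))\<^sup>2) (\<zeta> n r)))"
proof -
  have [measurable]: "X n r \<in> borel_measurable M" "W n r \<in> borel_measurable M" for n r
    using X W unfolding L2_rv_def by simp_all
  have "(\<integral>\<^sup>+ \<omega>. (\<Sum>n. ennreal (\<Sum>r\<le>N. (cmod (\<zeta> n r * (X n r \<omega> + W n r \<omega>) - X n r \<omega>))\<^sup>2)) \<partial>M) =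
        (\<Sum>n. \<Sum>r\<le>N. \<integral>\<^sup>+ \<omega>. ennreal ((cmod (\<zeta> n r * (X n r \<omega> + W n r \<omega>) - X n r \<omega>))\<^sup>2) \<partial>M)"
    by (simp add: nn_integral_suminf nn_integral_sum flip: sum_ennreal)
  also have "\<dots> = (\<Sum>n. ennreal (\<Sum>r\<le>N. wiener_risk (LINT \<omega>|M. (cmod (X n r \<omega>))\<^sup>2) (LINT \<omega>|M. (cmod (W n r \<omega>))\<^sup>2) (\<zeta> n r)))"
    by (simp add: nn_integral_estimation_error X W uncorr wiener_risk_nonneg flip: sum_ennreal)
  finally show ?thesis .
qed

lemma slsht_energy_covariance:
  assumes x: "gaussian_coeffs M x" and h_real: "\<forall>\<theta> \<phi>. (\<theta>, \<phi>) \<in> sph_dom \<longrightarrow> h \<theta> \<phi> \<in> \<real>"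
  shows "(\<Sum>c. \<Sum>c'. slsht_kernel h c r n * slsht_kernel h c' r n * (LINT \<omega>|M. x \<omega> c * cnj (x \<omega> c')))
       = complex_of_real (slsht_energy M h x n r)"
  unfolding slsht_energy_def slsht_kernel_comb_def
  by (rule integral_cmod_sq_real_comb[OF gaussian_coeffs_L2_rv[OF x] finite_kernel_support
        slsht_kernel_real[OF h_real] slsht_kernel_outside_support])

lemma nn_integral_filtered_slsht_error:
  assumes L2_s: "\<forall>\<omega>\<in>space M. sph_L2 (s \<omega>)" and L2_z: "\<forall>\<omega>\<in>space M. sph_L2 (z \<omega>)"
    and gauss_s: "gaussian_coeffs M (\<lambda>\<omega>. sh_coeff (s \<omega>))" and gauss_z: "gaussian_coeffs M (\<lambda>\<omega>. sh_coeff (z \<omega>))"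
    and uncorr: "\<forall>c c'. (LINT \<omega>|M. sh_coeff (s \<omega>) c * cnj (sh_coeff (z \<omega>) c')) = 0"
    and band: "\<forall>l m. l > L \<longrightarrow> sh_coeff_lm h l m = 0"
  shows "(\<integral>\<^sup>+ \<omega>. (\<Sum>n. sph_sqnorm (\<lambda>\<Theta> \<psi>. sph_conv (slsht h (\<lambda>\<theta> \<phi>. s \<omega> \<theta> \<phi> + z \<omega> \<theta> \<phi>) n)
                   (\<lambda>\<Theta> \<psi>. \<Sum>r\<le>L\<^sup>2 + 2 * L. \<zeta> n r * Yn r \<Theta> \<psi>) \<Theta> \<psi> - slsht h (s \<omega>) n \<Theta> \<psi>)) \<partial>M)
    = (\<Sum>n. ennreal (\<Sum>r\<le>L\<^sup>2 + 2 * L.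
          wiener_risk (slsht_energy M h (\<lambda>\<omega>. sh_coeff (s \<omega>)) n r) (slsht_energy M h (\<lambda>\<omega>. sh_coeff (z \<omega>)) n r) (\<zeta> n r)))"
proof -
  define X where "X = (\<lambda>n r \<omega>. slsht_kernel_comb h (sh_coeff (s \<omega>)) n r)"
  define W where "W = (\<lambda>n r \<omega>. slsht_kernel_comb h (sh_coeff (z \<omega>)) n r)"
  have s_L2: "L2_rv M (\<lambda>\<omega>. sh_coeff (s \<omega>) c)" and z_L2: "L2_rv M (\<lambda>\<omega>. sh_coeff (z \<omega>) c)" for c
    using gaussian_coeffs_L2_rv[OF gauss_s] gaussian_coeffs_L2_rv[OF gauss_z] by simp_all
  have X_L2: "L2_rv M (X n r)" and W_L2: "L2_rv M (W n r)" for n r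
    unfolding X_def W_def slsht_kernel_comb_def by (intro L2_rv_sum L2_rv_cmult s_L2 z_L2)+
  have XW_uncorr: "(LINT \<omega>|M. X n r \<omega> * cnj (W n r \<omega>)) = 0" for n r
    unfolding X_def W_def slsht_kernel_comb_def
    by (subst integral_sum_mult_cnj_sum[OF finite_kernel_support finite_kernel_support s_L2 z_L2]) (simp add: uncorr)
  have "(\<integral>\<^sup>+ \<omega>. (\<Sum>n. sph_sqnorm (\<lambda>\<Theta> \<psi>. sph_conv (slsht h (\<lambda>\<theta> \<phi>. s \<omega> \<theta> \<phi> + z \<omega> \<theta> \<phi>) n)
                   (\<lambda>\<Theta> \<psi>. \<Sum>r\<le>L\<^sup>2 + 2 * L. \<zeta> n r * Yn r \<Theta> \<psi>) \<Theta> \<psi> - slsht h (s \<omega>) n \<Theta> \<psi>)) \<partial>M)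
      = (\<integral>\<^sup>+ \<omega>. (\<Sum>n. ennreal (\<Sum>r\<le>L\<^sup>2 + 2 * L. (cmod (\<zeta> n r * (X n r \<omega> + W n r \<omega>) - X n r \<omega>))\<^sup>2)) \<partial>M)"
    using L2_s L2_z
    by (intro nn_integral_cong suminf_cong) (simp add: sph_sqnorm_filtered_slsht_error[OF band] slsht_coeff_kernel X_def W_def)
  also have "\<dots> = (\<Sum>n. ennreal (\<Sum>r\<le>L\<^sup>2 + 2 * L.
          wiener_risk (slsht_energy M h (\<lambda>\<omega>. sh_coeff (s \<omega>)) n r) (slsht_energy M h (\<lambda>\<omega>. sh_coeff (z \<omega>)) n r) (\<zeta> n r)))"
    unfolding nn_integral_suminf_estimation_error[OF X_L2 W_L2 XW_uncorr] by (simp add: slsht_energy_def X_def W_def)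
  finally show ?thesis .
qed

end

theorem theorem1:
  fixes M :: "'w measure"
    and s z :: "'w \<Rightarrow> real \<Rightarrow> real \<Rightarrow> complex"
    and h :: "real \<Rightarrow> real \<Rightarrow> complex"
    and L\<^sub>h :: nat
  assumes "prob_space M"
    and L2_s: "\<forall>\<omega>\<in>space M. sph_L2 (s \<omega>)"
    and L2_z: "\<forall>\<omega>\<in>space M. sph_L2 (z \<omega>)"
    and gauss_s: "gaussian_coeffs M (\<lambda>\<omega>. sh_coeff (s \<omega>))"
    and gauss_z: "gaussian_coeffs M (\<lambda>\<omega>. sh_coeff (z \<omega>))"
    and mean_s: "\<forall>c. (LINT \<omega>|M. sh_coeff (s \<omega>) c) = 0"
    and mean_z: "\<forall>c. (LINT \<omega>|M. sh_coeff (z \<omega>) c) = 0"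
    and uncorr: "\<forall>c c'. (LINT \<omega>|M. sh_coeff (s \<omega>) c * cnj (sh_coeff (z \<omega>) c')) = 0"
    and h_L2: "sph_L2 h"
    and h_real: "\<forall>\<theta> \<phi>. (\<theta>, \<phi>) \<in> sph_dom \<longrightarrow> h \<theta> \<phi> \<in> \<real>"
    and h_azim: "\<forall>\<theta> \<phi> \<phi>'. (\<theta>, \<phi>) \<in> sph_dom \<longrightarrow> (\<theta>, \<phi>') \<in> sph_dom \<longrightarrow> h \<theta> \<phi> = h \<theta> \<phi>'"
    and h_band: "\<forall>l m. l > L\<^sub>h \<longrightarrow> sh_coeff_lm h l m = 0"
    and h_unit: "sph_inner h h = 1"
  shows
    "let N\<^sub>h = L\<^sub>h\<^sup>2 + 2 * L\<^sub>h;
         f = (\<lambda>\<omega> \<theta> \<phi>. s \<omega> \<theta> \<phi> + z \<omega> \<theta> \<phi>);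
         C\<^sub>S = (\<lambda>c c'. LINT \<omega>|M. sh_coeff (s \<omega>) c * cnj (sh_coeff (s \<omega>) c'));
         C\<^sub>Z = (\<lambda>c c'. LINT \<omega>|M. sh_coeff (z \<omega>) c * cnj (sh_coeff (z \<omega>) c'));
         H = (\<lambda>c r n. (-1) ^ nat \<bar>sh_ord r\<bar> * of_real (sqrt (4 * pi / (2 * real (sh_deg r) + 1)))
                       * sh_coeff_lm h (sh_deg r) 0 * triple c (sh_idx (sh_deg r) (- sh_ord r)) n);
         zeta_fun = (\<lambda>(\<zeta> :: nat \<Rightarrow> nat \<Rightarrow> complex) n \<Theta> \<psi>. \<Sum>r\<le>N\<^sub>h. \<zeta> n r * Yn r \<Theta> \<psi>);
         E\<^sub>s\<^sub>s = (\<lambda>\<zeta>. \<integral>\<^sup>+ \<omega>. (\<Sum>n. sph_sqnorm (\<lambda>\<Theta> \<psi>.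
                    sph_conv (slsht h (f \<omega>) n) (zeta_fun \<zeta> n) \<Theta> \<psi> - slsht h (s \<omega>) n \<Theta> \<psi>)) \<partial>M);
         num = (\<lambda>n r. \<Sum>c. \<Sum>c'. H c r n * H c' r n * C\<^sub>S c c');
         den = (\<lambda>n r. \<Sum>c. \<Sum>c'. H c r n * H c' r n * (C\<^sub>S c c' + C\<^sub>Z c c'));
         \<zeta>opt = (\<lambda>n r. if Re (den n r) > 0 then num n r / den n r else 0)
     in (\<forall>\<zeta>. E\<^sub>s\<^sub>s \<zeta>opt \<le> E\<^sub>s\<^sub>s \<zeta>) \<and>
        (\<forall>\<zeta>. E\<^sub>s\<^sub>s \<zeta>opt < \<infinity> \<longrightarrow> E\<^sub>s\<^sub>s \<zeta> \<le> E\<^sub>s\<^sub>s \<zeta>opt \<longrightarrow>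
              (\<forall>n r. r \<le> N\<^sub>h \<longrightarrow> Re (den n r) > 0 \<longrightarrow> \<zeta> n r = \<zeta>opt n r))"
proof -
  interpret prob_space M by fact
  let ?K = "slsht_kernel h"
  let ?CS = "\<lambda>c c'. LINT \<omega>|M. sh_coeff (s \<omega>) c * cnj (sh_coeff (s \<omega>) c')"
  let ?CZ = "\<lambda>c c'. LINT \<omega>|M. sh_coeff (z \<omega>) c * cnj (sh_coeff (z \<omega>) c')"
  define a where "a = slsht_energy M h (\<lambda>\<omega>. sh_coeff (s \<omega>))"
  define b where "b = slsht_energy M h (\<lambda>\<omega>. sh_coeff (z \<omega>))"
  note error = nn_integral_filtered_slsht_error[OF L2_s L2_z gauss_s gauss_z uncorr h_band, folded a_def b_def]
  have num: "(\<Sum>c. \<Sum>c'. ?K c r n * ?K c' r n * ?CS c c') = complex_of_real (a n r)"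
    and noise: "(\<Sum>c. \<Sum>c'. ?K c r n * ?K c' r n * ?CZ c c') = complex_of_real (b n r)" for n r
    unfolding a_def b_def by (intro slsht_energy_covariance gauss_s gauss_z h_real)+
  have den: "(\<Sum>c. \<Sum>c'. ?K c r n * ?K c' r n * (?CS c c' + ?CZ c c')) = complex_of_real (a n r + b n r)" for n r
    using suminf_suminf_finite_support_add[OF finite_kernel_support slsht_kernel_outside_support]
    by (simp add: num noise)
  have gain: "(if 0 < a n r + b n r then complex_of_real (a n r) / complex_of_real (a n r + b n r) else 0)
      = wiener_gain (a n r) (b n r)" for n r
    unfolding wiener_gain_def by simp
  have "0 \<le> a n r" "0 \<le> b n r" for n r unfolding a_def b_def slsht_energy_def by simp_all
  note optimal = wiener_gain_minimizes_series[of a b, OF this]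
  show ?thesis
    unfolding Let_def slsht_kernel_def[symmetric] error num den gain Re_complex_of_real
    using optimal by blast
qed

end
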